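(* Let $f:\mathbb N\to(0,\infty)$ satisfy $f(n)\to\infty$. There exists a critical offspring distribution $\mu$ such that \[ \limsup_{n\to\infty}\mathbf P\big(\mathsf{Height}(\mathrm T_n)<f(n)\ln n\big)=1\qquad\text{and}\qquad\limsup_{n\to\infty}\mathbf P\big(\mathsf{Width}(\mathrm T_n)>n/f(n)\big)=1, \] where the limits superior are taken along integers $n$ with $\mathbf P(|\mathrm T|=n)>0$.
   Context: An offspring distribution is a probability measure $\mu=(\mu_k)_{k\ge 0}$ on $\mathbb Z_+$; it is critical if $\sum_k k\mu_k=1$. A $\mu$-Bienaymé tree $\mathrm T=\mathrm T(\mu)$ is the family tree of a Galton–Watson process with offspring distribution $\mu$ started from one individual; $\mathrm T_n$ is $\mathrm T$ conditioned on having exactly $n$ vertices (defined when $\mathbf P(|\mathrm T|=n)>0$). $\mathsf{Height}$ is the maximal distance of a vertex from the root and $\mathsf{Width}$ is the maximal number of vertices at a common distance from the root. *)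

theory Defs
  imports "HOL-Analysis.Analysis"
begin

text \<open>Finite rooted plane (ordered) trees: a vertex is given by the list of its children.\<close>
datatype ptree = Node "ptree list"

fun tsize :: "ptree \<Rightarrow> nat" where
  "tsize (Node ts) = 1 + sum_list (map tsize ts)"

fun theight :: "ptree \<Rightarrow> nat" where
  "theight (Node ts) = (if ts = [] then 0 else 1 + Max (set (map theight ts)))"

fun levelcount :: "ptree \<Rightarrow> nat \<Rightarrow> nat" where
  "levelcount (Node ts) 0 = 1"
| "levelcount (Node ts) (Suc k) = sum_list (map (\<lambda>s. levelcount s k) ts)"

definition twidth :: "ptree \<Rightarrow> nat" where
  "twidth t = Max (levelcount t ` {..theight t})"

definition offspring_distr :: "(nat \<Rightarrow> real) \<Rightarrow> bool" where
  "offspring_distr \<mu> \<longleftrightarrow> (\<forall>k. 0 \<le> \<mu> k) \<and> \<mu> sums 1"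

definition critical :: "(nat \<Rightarrow> real) \<Rightarrow> bool" where
  "critical \<mu> \<longleftrightarrow> offspring_distr \<mu> \<and> (\<lambda>k. real k * \<mu> k) sums 1"

text \<open>Probability that the \<mu>-Bienaym\'e tree equals the finite plane tree t.\<close>
fun bw_weight :: "(nat \<Rightarrow> real) \<Rightarrow> ptree \<Rightarrow> real" where
  "bw_weight \<mu> (Node ts) = \<mu> (length ts) * prod_list (map (bw_weight \<mu>) ts)"

definition size_prob :: "(nat \<Rightarrow> real) \<Rightarrow> nat \<Rightarrow> real" where
  "size_prob \<mu> n = (\<Sum>t\<in>{t. tsize t = n}. bw_weight \<mu> t)"

text \<open>P(T_n satisfies P) = P(|T| = n and T satisfies P) / P(|T| = n).\<close>
definition cond_prob :: "(nat \<Rightarrow> real) \<Rightarrow> nat \<Rightarrow> (ptree \<Rightarrow> bool) \<Rightarrow> real" where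
  "cond_prob \<mu> n P = (\<Sum>t\<in>{t. tsize t = n \<and> P t}. bw_weight \<mu> t) / size_prob \<mu> n"

definition admissible_seq :: "(nat \<Rightarrow> real) \<Rightarrow> nat filter" where
  "admissible_seq \<mu> = inf sequentially (principal {n. size_prob \<mu> n > 0})"

end

theory Submission
  imports Defs
begin

text \<open>The offspring distribution \<open>\<mu>\<close> puts mass \<open>(1/2) ^ (j+1) / K\<^sub>j\<close> on a rapidly
  increasing sequence of degrees \<open>K\<^sub>j\<close> and the remaining mass on 0, so it is critical, while \<open>\<mu>\<close>
  restricted to degrees below \<open>K\<^sub>j\<close> is subcritical with mean \<open>1 - (1/2) ^ j\<close>.

  Fix \<open>j \<ge> 2\<close> and look at the sizes \<open>K\<^sub>j < n \<le> 8\<^sup>j K\<^sub>j\<close>. A tree whose root has exactly \<open>K\<^sub>j\<close>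
  children, each spanning a subcritical tree, has total size in this window with probability
  comparable to \<open>\<mu> K\<^sub>j\<close> (Markov's inequality for the size); it has width at least
  \<open>K\<^sub>j > n / f n\<close> because \<open>f\<close> is huge beyond \<open>K\<^sub>j\<close>, and it is short unless it lies in the tiny set
  of trees of height at least \<open>h \<le> f n ln n\<close>. The other trees in the window either have all
  outdegrees below \<open>K\<^sub>j\<close>, which is rare for more than \<open>K\<^sub>j\<close> vertices by the second moment of the
  subcritical size, or are tall. Comparing the two total weights, some size \<open>n\<close> in the window has a
  proportion at least \<open>j / (j+1)\<close> of short and wide trees; hence both limits superior are 1.\<close>

section \<open>Size, height, outdegree and width of plane trees\<close>

fun max_outdeg :: "ptree \<Rightarrow> nat" where
  "max_outdeg (Node ts) = Max (insert (length ts) (set (map max_outdeg ts)))"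

lemma one_le_tsize: "1 \<le> tsize t"
  by (cases t) auto

lemma length_le_sum_tsize: "length ts \<le> sum_list (map tsize ts)"
proof -
  have "sum_list (map (\<lambda>_. 1::nat) ts) \<le> sum_list (map tsize ts)"
    by (rule sum_list_mono) (use one_le_tsize in auto)
  then show ?thesis
    by (simp add: sum_list_triv)
qed

lemma theight_Node_le_Suc_iff: "theight (Node ts) \<le> Suc h \<longleftrightarrow> (\<forall>c\<in>set ts. theight c \<le> h)"
proof (cases "ts = []")
  case False
  then have "Max (theight ` set ts) \<le> h \<longleftrightarrow> (\<forall>c\<in>set ts. theight c \<le> h)"
    by (subst Max_le_iff) auto
  with False show ?thesis
    by simp
qed simp

lemma Suc_le_theight_Node_iff: "Suc k \<le> theight (Node ts) \<longleftrightarrow> (\<exists>c\<in>set ts. k \<le> theight c)"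
  by (cases "ts = []") (auto simp: Max_ge_iff)

lemma of_bool_Suc_le_theight_Node:
  "of_bool (Suc k \<le> theight (Node ts)) \<le> sum_list (map (\<lambda>c. of_bool (k \<le> theight c) :: real) ts)"
proof (cases "Suc k \<le> theight (Node ts)")
  case True
  then obtain c where c: "c \<in> set ts" "k \<le> theight c"
    using Suc_le_theight_Node_iff by blast
  then have "of_bool (k \<le> theight c) \<le> sum_list (map (\<lambda>c. of_bool (k \<le> theight c) :: real) ts)"
    by (intro member_le_sum_list) auto
  with True c show ?thesis
    by simp
next
  case False
  have "0 \<le> sum_list (map (\<lambda>c. of_bool (k \<le> theight c) :: real) ts)"
    by (intro sum_list_nonneg) auto
  with False show ?thesis
    by simp
qed

lemma theight_less_tsize: "theight t < tsize t"
proof (induction t)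
  case (Node ts)
  show ?case
  proof (cases "ts = []")
    case False
    then obtain c where c: "c \<in> set ts" "theight (Node ts) = Suc (theight c)"
      using Max_in[of "theight ` set ts"] by fastforce
    then have "tsize c \<le> sum_list (map tsize ts)"
      by (simp add: member_le_sum_list)
    with Node c show ?thesis
      by fastforce
  qed simp
qed

lemma max_outdeg_less_tsize: "max_outdeg t < tsize t"
proof (induction t)
  case (Node ts)
  have "max_outdeg c < tsize (Node ts)" if "c \<in> set ts" for c
    using Node that member_le_sum_list[of "tsize c" "map tsize ts"] by fastforce
  with length_le_sum_tsize[of ts] show ?case
    by auto
qed

lemma levelcount_0 [simp]: "levelcount t 0 = 1"
  by (cases t) auto

lemma levelcount_le_twidth: "k \<le> theight t \<Longrightarrow> levelcount t k \<le> twidth t"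
  unfolding twidth_def by (intro Max_ge) auto

lemma max_outdeg_le_levelcount: "\<exists>k\<le>theight t. max_outdeg t \<le> levelcount t k"
proof (induction t)
  case (Node ts)
  consider "max_outdeg (Node ts) = length ts"
    | c where "c \<in> set ts" "max_outdeg (Node ts) = max_outdeg c"
    using Max_in[of "insert (length ts) (set (map max_outdeg ts))"] by auto
  then show ?case
  proof cases
    case 1
    show ?thesis
    proof (cases "ts = []")
      case False
      have "levelcount (Node ts) 1 = length ts"
        by (simp add: sum_list_triv)
      moreover have "1 \<le> theight (Node ts)"
        using False by simp
      ultimately show ?thesis
        using 1 by (intro exI[of _ 1]) auto
    qed (use 1 in auto)
  next
    case 2
    obtain k where k: "k \<le> theight c" "max_outdeg c \<le> levelcount c k"
      using Node 2(1) by auto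
    have "levelcount c k \<le> levelcount (Node ts) (Suc k)"
      using 2(1) by (simp add: member_le_sum_list)
    moreover have "Suc k \<le> theight (Node ts)"
      using Suc_le_theight_Node_iff k(1) 2(1) by blast
    ultimately show ?thesis
      using k 2 by (intro exI[of _ "Suc k"]) auto
  qed
qed

lemma max_outdeg_le_twidth: "max_outdeg t \<le> twidth t"
  using max_outdeg_le_levelcount levelcount_le_twidth le_trans by blast


definition lists_of_length :: "nat \<Rightarrow> 'a set \<Rightarrow> 'a list set" where
  "lists_of_length d A = {xs. length xs = d \<and> set xs \<subseteq> A}"

lemma lists_of_length_0 [simp]: "lists_of_length 0 A = {[]}"
  by (auto simp: lists_of_length_def)

lemma lists_of_length_Suc:
  "lists_of_length (Suc d) A = (\<lambda>(x, xs). x # xs) ` (A \<times> lists_of_length d A)"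
  unfolding lists_of_length_def by (auto simp: length_Suc_conv)

lemma finite_lists_of_length: "finite A \<Longrightarrow> finite (lists_of_length d A)"
  by (induction d) (auto simp: lists_of_length_Suc)

lemma sum_lists_of_length_Suc:
  assumes "finite A"
  shows "(\<Sum>xs\<in>lists_of_length (Suc d) A. g xs) = (\<Sum>x\<in>A. \<Sum>xs\<in>lists_of_length d A. g (x # xs))"
proof -
  have "inj_on (\<lambda>(x, xs). x # xs) (A \<times> lists_of_length d A)"
    by (auto simp: inj_on_def)
  then have "(\<Sum>xs\<in>lists_of_length (Suc d) A. g xs)
      = (\<Sum>p\<in>A \<times> lists_of_length d A. g (fst p # snd p))"
    unfolding lists_of_length_Suc by (subst sum.reindex) (auto simp: case_prod_beta)
  also have "\<dots> = (\<Sum>x\<in>A. \<Sum>xs\<in>lists_of_length d A. g (x # xs))"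
    by (simp add: sum.cartesian_product split_def)
  finally show ?thesis .
qed

lemma sum_prod_list_lists_of_length:
  fixes w :: "'a \<Rightarrow> 'b::comm_semiring_1"
  assumes "finite A"
  shows "(\<Sum>xs\<in>lists_of_length d A. prod_list (map w xs)) = sum w A ^ d"
  by (induction d)
    (simp_all add: assms sum_lists_of_length_Suc sum_distrib_left[symmetric] sum_distrib_right[symmetric])

text \<open>If the weights \<open>w\<close> form a sub-probability on \<open>A\<close>, the next two lemmas bound the first
  and second moments of \<open>\<phi> x\<^sub>1 + \<dots> + \<phi> x\<^sub>d\<close> for \<open>d\<close> independent samples \<open>x\<^sub>i\<close>.\<close>

lemma sum_prod_list_sum_list_le:
  fixes w \<phi> :: "'a \<Rightarrow> real"
  assumes "finite A" "\<And>x. x \<in> A \<Longrightarrow> 0 \<le> w x" "\<And>x. x \<in> A \<Longrightarrow> 0 \<le> \<phi> x" "sum w A \<le> 1"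
  shows "(\<Sum>xs\<in>lists_of_length d A. prod_list (map w xs) * sum_list (map \<phi> xs))
    \<le> d * (\<Sum>x\<in>A. w x * \<phi> x)"
proof (induction d)
  case (Suc d)
  let ?E = "\<Sum>x\<in>A. w x * \<phi> x"
  let ?S = "\<Sum>xs\<in>lists_of_length d A. prod_list (map w xs) * sum_list (map \<phi> xs)"
  have w_nonneg: "0 \<le> sum w A"
    using assms by (auto intro!: sum_nonneg)
  have "(\<Sum>xs\<in>lists_of_length (Suc d) A. prod_list (map w xs) * sum_list (map \<phi> xs))
      = (\<Sum>x\<in>A. \<Sum>xs\<in>lists_of_length d A.
          (w x * \<phi> x) * prod_list (map w xs) + w x * (prod_list (map w xs) * sum_list (map \<phi> xs)))"
    using assms(1) by (simp add: sum_lists_of_length_Suc algebra_simps)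
  also have "\<dots> = ?E * sum w A ^ d + sum w A * ?S"
    using assms(1) by (simp add: sum.distrib sum_distrib_left[symmetric] sum_distrib_right[symmetric]
        sum_prod_list_lists_of_length)
  also have "\<dots> \<le> ?E * 1 + 1 * (d * ?E)"
  proof (intro add_mono mult_mono)
    show "sum w A ^ d \<le> 1"
      using w_nonneg assms(4) by (rule power_le_one)
    show "0 \<le> ?E"
      using assms by (intro sum_nonneg) auto
    show "0 \<le> ?S"
      using assms unfolding lists_of_length_def
      by (intro sum_nonneg mult_nonneg_nonneg prod_list_nonneg sum_list_nonneg) auto
  qed (use Suc w_nonneg assms(4) in auto)
  finally show ?case
    by (simp add: algebra_simps)
qed simp

lemma sum_prod_list_sum_list_sq_le:
  fixes w \<phi> :: "'a \<Rightarrow> real"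
  assumes "finite A" "\<And>x. x \<in> A \<Longrightarrow> 0 \<le> w x" "\<And>x. x \<in> A \<Longrightarrow> 0 \<le> \<phi> x" "sum w A \<le> 1"
  shows "(\<Sum>xs\<in>lists_of_length d A. prod_list (map w xs) * (sum_list (map \<phi> xs))\<^sup>2)
    \<le> d * (\<Sum>x\<in>A. w x * (\<phi> x)\<^sup>2) + real d * (real d - 1) * (\<Sum>x\<in>A. w x * \<phi> x)\<^sup>2"
proof (induction d)
  case (Suc d)
  let ?E = "\<Sum>x\<in>A. w x * \<phi> x"
  let ?Q = "\<Sum>x\<in>A. w x * (\<phi> x)\<^sup>2"
  let ?S1 = "\<Sum>xs\<in>lists_of_length d A. prod_list (map w xs) * sum_list (map \<phi> xs)"
  let ?S2 = "\<Sum>xs\<in>lists_of_length d A. prod_list (map w xs) * (sum_list (map \<phi> xs))\<^sup>2"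
  have w_nonneg: "0 \<le> sum w A" and E_nonneg: "0 \<le> ?E"
    using assms by (auto intro!: sum_nonneg)
  have "(\<Sum>xs\<in>lists_of_length (Suc d) A. prod_list (map w xs) * (sum_list (map \<phi> xs))\<^sup>2)
      = (\<Sum>x\<in>A. \<Sum>xs\<in>lists_of_length d A. (w x * (\<phi> x)\<^sup>2) * prod_list (map w xs)
          + 2 * (w x * \<phi> x) * (prod_list (map w xs) * sum_list (map \<phi> xs))
          + w x * (prod_list (map w xs) * (sum_list (map \<phi> xs))\<^sup>2))"
    using assms(1) by (simp add: sum_lists_of_length_Suc algebra_simps power2_eq_square)
  also have "\<dots> = (\<Sum>x\<in>A. (w x * (\<phi> x)\<^sup>2) * (\<Sum>xs\<in>lists_of_length d A. prod_list (map w xs)))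
      + (\<Sum>x\<in>A. (2 * (w x * \<phi> x)) * ?S1) + (\<Sum>x\<in>A. w x * ?S2)"
    by (simp add: sum.distrib sum_distrib_left)
  also have "\<dots> = ?Q * sum w A ^ d + 2 * ?E * ?S1 + sum w A * ?S2"
    using assms(1)
    by (simp only: sum_prod_list_lists_of_length sum_distrib_right[symmetric] sum_distrib_left[symmetric])
  also have "\<dots> \<le> ?Q * 1 + 2 * ?E * (d * ?E) + 1 * (real d * ?Q + real d * (real d - 1) * ?E\<^sup>2)"
  proof (intro add_mono mult_mono mult_left_mono)
    show "sum w A ^ d \<le> 1"
      using w_nonneg assms(4) by (rule power_le_one)
    show "0 \<le> ?Q"
      using assms by (intro sum_nonneg) auto
    show "?S1 \<le> d * ?E"
      using assms by (rule sum_prod_list_sum_list_le)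
    show "0 \<le> ?S1" "0 \<le> ?S2"
      using assms unfolding lists_of_length_def
      by (intro sum_nonneg mult_nonneg_nonneg prod_list_nonneg sum_list_nonneg zero_le_power; auto)+
  qed (use Suc w_nonneg E_nonneg assms(4) in auto)
  also have "\<dots> = real (Suc d) * ?Q + real (Suc d) * (real (Suc d) - 1) * ?E\<^sup>2"
    by (simp add: algebra_simps power2_eq_square)
  finally show ?case .
qed simp


section \<open>Weights of trees with bounded outdegree and height\<close>

definition bounded_trees :: "nat \<Rightarrow> nat \<Rightarrow> ptree set" where
  "bounded_trees D h = {t. max_outdeg t < D \<and> theight t \<le> h}"

lemma bounded_trees_0:
  assumes "0 < D"
  shows "bounded_trees D 0 = {Node []}"
proof -
  have "theight t \<le> 0 \<Longrightarrow> t = Node []" for t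
    by (cases t) (auto split: if_splits)
  with assms show ?thesis
    by (auto simp: bounded_trees_def)
qed

lemma bounded_trees_Suc:
  "bounded_trees D (Suc h) = Node ` {ts. length ts < D \<and> set ts \<subseteq> bounded_trees D h}"
proof -
  have "t \<in> bounded_trees D (Suc h)
      \<longleftrightarrow> t \<in> Node ` {ts. length ts < D \<and> set ts \<subseteq> bounded_trees D h}" for t
  proof (cases t)
    case (Node ts)
    have "max_outdeg (Node ts) < D \<longleftrightarrow> length ts < D \<and> (\<forall>c\<in>set ts. max_outdeg c < D)"
      by (simp add: Max_less_iff)
    then show ?thesis
      using Node theight_Node_le_Suc_iff[of ts h] by (auto simp: bounded_trees_def)
  qed
  then show ?thesis
    by blast
qed

lemma finite_children_bounded_trees:
  "finite (bounded_trees D h) \<Longrightarrow> finite {ts. length ts < D \<and> set ts \<subseteq> bounded_trees D h}"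
  by (rule finite_subset[OF _ finite_lists_length_le[of _ D]]) auto

lemma finite_bounded_trees: "finite (bounded_trees D h)"
proof (induction h)
  case 0
  have "bounded_trees D 0 \<subseteq> {Node []}"
    using bounded_trees_0[of D] by (cases "D = 0") (auto simp: bounded_trees_def)
  then show ?case
    using finite_subset by blast
qed (simp add: bounded_trees_Suc finite_children_bounded_trees)

lemma sum_bounded_trees_Suc:
  "(\<Sum>t\<in>bounded_trees D (Suc h). g t)
    = (\<Sum>d<D. \<Sum>ts\<in>lists_of_length d (bounded_trees D h). g (Node ts))"
proof -
  let ?X = "{ts. length ts < D \<and> set ts \<subseteq> bounded_trees D h}"
  have "(\<Sum>t\<in>bounded_trees D (Suc h). g t) = (\<Sum>ts\<in>?X. g (Node ts))"
    unfolding bounded_trees_Suc by (subst sum.reindex) (auto simp: inj_on_def)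
  also have "\<dots> = (\<Sum>d<D. \<Sum>ts\<in>{ts \<in> ?X. length ts = d}. g (Node ts))"
    by (rule sum.group[symmetric]) (auto simp: finite_children_bounded_trees finite_bounded_trees)
  also have "\<dots> = (\<Sum>d<D. \<Sum>ts\<in>lists_of_length d (bounded_trees D h). g (Node ts))"
    by (intro sum.cong refl) (auto simp: lists_of_length_def)
  finally show ?thesis .
qed

lemma bw_weight_nonneg: "(\<And>k. 0 \<le> \<mu> k) \<Longrightarrow> 0 \<le> bw_weight \<mu> t"
  by (induction t) (auto intro!: mult_nonneg_nonneg prod_list_nonneg)

lemma real_sum_list_tsize: "sum_list (map (\<lambda>t. real (tsize t)) ts) = real (sum_list (map tsize ts))"
  by (simp add: sum_list_of_nat[symmetric] o_def)

lemma real_tsize_Node: "real (tsize (Node ts)) = 1 + sum_list (map (\<lambda>t. real (tsize t)) ts)"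
  by (simp add: real_sum_list_tsize)

lemma le_fixpoint_of_contraction:
  fixes x :: "nat \<Rightarrow> real"
  assumes "m < 1" "0 \<le> m" "x 0 \<le> c / (1 - m)" "\<And>h. x (Suc h) \<le> c + m * x h"
  shows "x h \<le> c / (1 - m)"
proof (induction h)
  case (Suc h)
  have "x (Suc h) \<le> c + m * (c / (1 - m))"
    using assms(4)[of h] mult_left_mono[OF Suc assms(2)] by linarith
  also have "\<dots> = c / (1 - m)"
    using assms(1) by (simp add: field_simps)
  finally show ?case .
qed (use assms(3) in simp)

text \<open>Sums of \<open>bw_weight \<mu>\<close> over \<open>bounded_trees D h\<close> are expectations for the Galton--Watson tree
  whose offspring law is \<open>\<mu>\<close> restricted to \<open>{..<D}\<close>, a sub-probability; the bounds below are
  proved by induction on \<open>h\<close>, splitting a tree at its root.\<close>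

locale truncated_offspring =
  fixes \<mu> :: "nat \<Rightarrow> real" and D :: nat
  assumes nonneg: "\<And>k. 0 \<le> \<mu> k" and D_pos: "0 < D" and total_le_1: "(\<Sum>d<D. \<mu> d) \<le> 1"
begin

abbreviation "bw \<equiv> bw_weight \<mu>"

definition "mass h = (\<Sum>t\<in>bounded_trees D h. bw t)"
definition "mean = (\<Sum>d<D. real d * \<mu> d)"
definition "factorial_moment2 = (\<Sum>d<D. real d * (real d - 1) * \<mu> d)"
definition "defect = 1 - (\<Sum>d<D. \<mu> d)"
definition "size_moment1 h = (\<Sum>t\<in>bounded_trees D h. bw t * real (tsize t))"
definition "size_moment2 h = (\<Sum>t\<in>bounded_trees D h. bw t * (real (tsize t))\<^sup>2)"
definition "height_tail h k = (\<Sum>t\<in>{t \<in> bounded_trees D h. k \<le> theight t}. bw t)"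

lemma bw_nonneg: "0 \<le> bw t"
  using bw_weight_nonneg nonneg by blast

lemma mean_nonneg: "0 \<le> mean"
  unfolding mean_def using nonneg by (intro sum_nonneg) auto

lemma factorial_moment2_nonneg: "0 \<le> factorial_moment2"
proof -
  have d_nonneg: "0 \<le> real d * (real d - 1)" for d
    by (cases d) auto
  show ?thesis
    unfolding factorial_moment2_def by (intro sum_nonneg mult_nonneg_nonneg[OF d_nonneg nonneg])
qed

lemma sum_bounded_trees_Suc_bw:
  "(\<Sum>t\<in>bounded_trees D (Suc h). bw t * g t)
    = (\<Sum>d<D. \<mu> d * (\<Sum>ts\<in>lists_of_length d (bounded_trees D h). prod_list (map bw ts) * g (Node ts)))"
  unfolding sum_bounded_trees_Suc sum_distrib_left
  by (intro sum.cong refl) (auto simp: lists_of_length_def mult.assoc)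

lemma sum_bounded_trees_0_bw: "(\<Sum>t\<in>bounded_trees D 0. bw t * g t) = \<mu> 0 * g (Node [])"
  using D_pos by (simp add: bounded_trees_0)

lemma mass_Suc: "mass (Suc h) = (\<Sum>d<D. \<mu> d * mass h ^ d)"
  using sum_bounded_trees_Suc_bw[where h=h and g="\<lambda>_. 1"]
  by (simp add: mass_def sum_prod_list_lists_of_length finite_bounded_trees)

lemma mu_0_le_1: "\<mu> 0 \<le> 1"
  using member_le_sum[of 0 "{..<D}" \<mu>] D_pos nonneg total_le_1 by auto

lemma mass_nonneg: "0 \<le> mass h"
  unfolding mass_def by (intro sum_nonneg bw_nonneg)

lemma mass_le_1: "mass h \<le> 1"
proof (induction h)
  case 0
  then show ?case
    using sum_bounded_trees_0_bw[of "\<lambda>_. 1"] mu_0_le_1 by (simp add: mass_def)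
next
  case (Suc h)
  have "(\<Sum>d<D. \<mu> d * mass h ^ d) \<le> (\<Sum>d<D. \<mu> d)"
    using Suc mass_nonneg nonneg by (intro sum_mono mult_right_le_one_le power_le_one) auto
  then show ?case
    using total_le_1 mass_Suc by auto
qed

lemma sum_lists_of_length_bounded_trees_le:
  assumes "\<And>t. 0 \<le> \<phi> t"
  shows "(\<Sum>ts\<in>lists_of_length d (bounded_trees D h). prod_list (map bw ts) * sum_list (map \<phi> ts))
    \<le> d * (\<Sum>t\<in>bounded_trees D h. bw t * \<phi> t)"
  using mass_le_1 unfolding mass_def
  by (intro sum_prod_list_sum_list_le finite_bounded_trees) (auto simp: bw_nonneg assms)

lemma size_moment1_nonneg: "0 \<le> size_moment1 h"
  unfolding size_moment1_def by (intro sum_nonneg mult_nonneg_nonneg) (auto simp: bw_nonneg)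

lemma size_moment1_Suc_le: "size_moment1 (Suc h) \<le> 1 + mean * size_moment1 h"
proof -
  let ?S = "\<lambda>ts. sum_list (map (\<lambda>t. real (tsize t)) ts)"
  let ?L = "\<lambda>d. lists_of_length d (bounded_trees D h)"
  have "size_moment1 (Suc h)
      = (\<Sum>d<D. \<mu> d * (\<Sum>ts\<in>?L d. prod_list (map bw ts) + prod_list (map bw ts) * ?S ts))"
    unfolding size_moment1_def sum_bounded_trees_Suc_bw real_tsize_Node by (simp add: algebra_simps)
  also have "\<dots> = (\<Sum>d<D. \<mu> d * (mass h ^ d + (\<Sum>ts\<in>?L d. prod_list (map bw ts) * ?S ts)))"
    by (simp add: sum.distrib sum_prod_list_lists_of_length finite_bounded_trees mass_def)
  also have "\<dots> \<le> (\<Sum>d<D. \<mu> d * (1 + d * size_moment1 h))"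
    unfolding size_moment1_def
    using mass_nonneg mass_le_1
    by (intro sum_mono mult_left_mono add_mono power_le_one sum_lists_of_length_bounded_trees_le)
      (auto simp: nonneg)
  also have "\<dots> = (\<Sum>d<D. \<mu> d) + (\<Sum>d<D. real d * \<mu> d * size_moment1 h)"
    by (simp add: sum.distrib algebra_simps)
  also have "\<dots> = (\<Sum>d<D. \<mu> d) + mean * size_moment1 h"
    by (simp add: mean_def sum_distrib_right)
  finally show ?thesis
    using total_le_1 by linarith
qed

lemma size_moment1_le:
  assumes "mean < 1"
  shows "size_moment1 h \<le> 1 / (1 - mean)"
proof (rule le_fixpoint_of_contraction[OF assms mean_nonneg])
  have "1 \<le> 1 / (1 - mean)"
    using assms mean_nonneg by (simp add: le_divide_eq)
  then show "size_moment1 0 \<le> 1 / (1 - mean)"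
    using sum_bounded_trees_0_bw[of "\<lambda>t. real (tsize t)"] mu_0_le_1 by (simp add: size_moment1_def)
qed (rule size_moment1_Suc_le)

lemma size_moment2_Suc_le:
  "size_moment2 (Suc h) \<le> 1 + 2 * mean * size_moment1 h + mean * size_moment2 h
    + factorial_moment2 * (size_moment1 h)\<^sup>2"
proof -
  let ?S = "\<lambda>ts. sum_list (map (\<lambda>t. real (tsize t)) ts)"
  let ?L = "\<lambda>d. lists_of_length d (bounded_trees D h)"
  let ?E = "size_moment1 h"
  have "size_moment2 (Suc h) = (\<Sum>d<D. \<mu> d * (\<Sum>ts\<in>?L d. prod_list (map bw ts)
      + 2 * (prod_list (map bw ts) * ?S ts) + prod_list (map bw ts) * (?S ts)\<^sup>2))"
    unfolding size_moment2_def sum_bounded_trees_Suc_bw real_tsize_Node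
    by (simp add: algebra_simps power2_eq_square)
  also have "\<dots> = (\<Sum>d<D. \<mu> d * (mass h ^ d + 2 * (\<Sum>ts\<in>?L d. prod_list (map bw ts) * ?S ts)
      + (\<Sum>ts\<in>?L d. prod_list (map bw ts) * (?S ts)\<^sup>2)))"
    by (simp add: sum.distrib sum_distrib_left sum_prod_list_lists_of_length finite_bounded_trees mass_def)
  also have "\<dots> \<le> (\<Sum>d<D. \<mu> d * (1 + 2 * (d * ?E)
      + (d * size_moment2 h + real d * (real d - 1) * ?E\<^sup>2)))"
  proof (intro sum_mono mult_left_mono add_mono)
    fix d
    show "mass h ^ d \<le> 1"
      using mass_nonneg mass_le_1 by (rule power_le_one)
    show "(\<Sum>ts\<in>?L d. prod_list (map bw ts) * ?S ts) \<le> d * ?E"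
      unfolding size_moment1_def by (rule sum_lists_of_length_bounded_trees_le) simp
    show "(\<Sum>ts\<in>?L d. prod_list (map bw ts) * (?S ts)\<^sup>2)
        \<le> d * size_moment2 h + real d * (real d - 1) * ?E\<^sup>2"
      using mass_le_1 unfolding size_moment1_def size_moment2_def mass_def
      by (intro sum_prod_list_sum_list_sq_le finite_bounded_trees) (auto simp: bw_nonneg)
  qed (auto simp: nonneg)
  also have "\<dots> = (\<Sum>d<D. \<mu> d + (real d * \<mu> d) * (2 * ?E) + (real d * \<mu> d) * size_moment2 h
      + (real d * (real d - 1) * \<mu> d) * ?E\<^sup>2)"
    by (intro sum.cong refl) (simp add: algebra_simps)
  also have "\<dots> = (\<Sum>d<D. \<mu> d) + mean * (2 * ?E) + mean * size_moment2 h + factorial_moment2 * ?E\<^sup>2"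
    by (simp only: sum.distrib sum_distrib_right[symmetric] mean_def factorial_moment2_def)
  finally show ?thesis
    using total_le_1 by (simp add: algebra_simps)
qed

lemma size_moment2_le:
  assumes "mean < 1"
  shows "size_moment2 h
    \<le> (1 + 2 * mean * (1 / (1 - mean)) + factorial_moment2 * (1 / (1 - mean))\<^sup>2) / (1 - mean)"
proof (rule le_fixpoint_of_contraction[OF assms mean_nonneg])
  let ?c = "1 + 2 * mean * (1 / (1 - mean)) + factorial_moment2 * (1 / (1 - mean))\<^sup>2"
  have "1 \<le> ?c"
    using assms mean_nonneg factorial_moment2_nonneg by auto
  then have "1 \<le> ?c / (1 - mean)"
    using assms mean_nonneg by (simp add: le_divide_eq)
  then show "size_moment2 0 \<le> ?c / (1 - mean)"
    using sum_bounded_trees_0_bw[of "\<lambda>t. (real (tsize t))\<^sup>2"] mu_0_le_1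
    by (simp add: size_moment2_def)
  fix h
  show "size_moment2 (Suc h) \<le> ?c + mean * size_moment2 h"
    using size_moment2_Suc_le[of h] size_moment1_le[OF assms, of h] size_moment1_nonneg[of h]
      mean_nonneg factorial_moment2_nonneg
      mult_left_mono[of "size_moment1 h" "1 / (1 - mean)" "2 * mean"]
      mult_left_mono[OF power_mono[of "size_moment1 h" "1 / (1 - mean)" 2] factorial_moment2_nonneg]
    by linarith
qed


lemma height_tail_eq: "height_tail h k = (\<Sum>t\<in>bounded_trees D h. bw t * of_bool (k \<le> theight t))"
proof -
  have "(\<Sum>t\<in>bounded_trees D h. bw t * of_bool (k \<le> theight t))
      = (\<Sum>t\<in>bounded_trees D h. if k \<le> theight t then bw t else 0)"
    by (intro sum.cong) auto
  then show ?thesis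
    unfolding height_tail_def by (simp add: sum.inter_filter[OF finite_bounded_trees])
qed

lemma height_tail_le: "height_tail h k \<le> mean ^ k"
proof (induction h arbitrary: k)
  case 0
  show ?case
  proof (cases k)
    case 0
    then show ?thesis
      using mass_le_1[of 0] by (simp add: height_tail_def mass_def)
  next
    case (Suc k')
    have empty: "{t \<in> bounded_trees D 0. k \<le> theight t} = {}"
      using Suc by (auto simp: bounded_trees_def)
    show ?thesis
      unfolding height_tail_def empty using mean_nonneg by simp
  qed
next
  case (Suc h)
  show ?case
  proof (cases k)
    case 0
    then show ?thesis
      using mass_le_1[of "Suc h"] by (simp add: height_tail_def mass_def)
  next
    case (Suc k')
    let ?\<phi> = "\<lambda>t. of_bool (k' \<le> theight t) :: real"
    have "height_tail (Suc h) k = (\<Sum>d<D. \<mu> d * (\<Sum>ts\<in>lists_of_length d (bounded_trees D h).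
        prod_list (map bw ts) * of_bool (Suc k' \<le> theight (Node ts))))"
      unfolding height_tail_eq Suc by (rule sum_bounded_trees_Suc_bw)
    also have "\<dots> \<le> (\<Sum>d<D. \<mu> d * (\<Sum>ts\<in>lists_of_length d (bounded_trees D h).
        prod_list (map bw ts) * sum_list (map ?\<phi> ts)))"
      unfolding lists_of_length_def
      by (intro sum_mono mult_left_mono nonneg of_bool_Suc_le_theight_Node prod_list_nonneg)
        (auto simp: bw_nonneg)
    also have "\<dots> \<le> (\<Sum>d<D. \<mu> d * (d * height_tail h k'))"
      unfolding height_tail_eq
      by (intro sum_mono mult_left_mono nonneg sum_lists_of_length_bounded_trees_le) simp
    also have "\<dots> = mean * height_tail h k'"
      by (simp add: mean_def sum_distrib_left mult_ac)
    also have "\<dots> \<le> mean ^ k"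
      using Suc.IH[of k'] mean_nonneg Suc by (simp add: mult_left_mono)
    finally show ?thesis .
  qed
qed

lemma defect_nonneg: "0 \<le> defect"
  using total_le_1 by (simp add: defect_def)

lemma one_minus_mass_le:
  assumes "mean < 1"
  shows "1 - mass h \<le> defect / (1 - mean) + mean ^ h"
proof (induction h)
  case 0
  have "0 \<le> defect / (1 - mean)"
    using defect_nonneg assms by simp
  then show ?case
    using mass_nonneg[of 0] by simp
next
  case (Suc h)
  have "1 - mass (Suc h) = defect + (\<Sum>d<D. \<mu> d * (1 - mass h ^ d))"
    unfolding mass_Suc defect_def by (simp add: sum_subtractf algebra_simps sum_distrib_left)
  also have "\<dots> \<le> defect + (\<Sum>d<D. \<mu> d * (d * (1 - mass h)))"
    using Bernoulli_inequality[of "mass h - 1"] mass_nonneg[of h]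
    by (intro add_mono sum_mono mult_left_mono nonneg) (auto simp: algebra_simps)
  also have "\<dots> = defect + mean * (1 - mass h)"
    by (simp add: mean_def sum_distrib_left mult_ac)
  also have "\<dots> \<le> defect + mean * (defect / (1 - mean) + mean ^ h)"
    using Suc mean_nonneg by (intro add_mono mult_left_mono) auto
  also have "\<dots> = defect / (1 - mean) + mean ^ Suc h"
    using assms by (simp add: field_simps)
  finally show ?case .
qed

end


lemma tsize_le_imp_bounded_trees: "tsize t \<le> B \<Longrightarrow> B \<le> D \<Longrightarrow> t \<in> bounded_trees D B"
  using max_outdeg_less_tsize[of t] theight_less_tsize[of t] by (auto simp: bounded_trees_def)

lemma finite_tsize_le: "finite {t. tsize t \<le> B}"
  by (rule finite_subset[OF _ finite_bounded_trees[of B B]]) (auto intro: tsize_le_imp_bounded_trees)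

lemma finite_tsize_eq: "finite {t. tsize t = n \<and> P t}"
  by (rule finite_subset[OF _ finite_tsize_le[of n]]) auto

lemma sum_group_tsize:
  assumes "finite N"
  shows "(\<Sum>n\<in>N. \<Sum>t\<in>{t. tsize t = n \<and> P n t}. g t)
    = (\<Sum>t\<in>{t. tsize t \<in> N \<and> P (tsize t) t}. g t)"
proof -
  let ?S = "{t. tsize t \<in> N \<and> P (tsize t) t}"
  have "?S \<subseteq> {t. tsize t \<le> Max N}"
    using assms by auto
  then have "finite ?S"
    using finite_tsize_le finite_subset by blast
  then have "(\<Sum>t\<in>?S. g t) = (\<Sum>n\<in>N. \<Sum>t\<in>{t \<in> ?S. tsize t = n}. g t)"
    by (intro sum.group[symmetric] assms) auto
  also have "\<dots> = (\<Sum>n\<in>N. \<Sum>t\<in>{t. tsize t = n \<and> P n t}. g t)"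
    by (intro sum.cong refl) auto
  finally show ?thesis ..
qed

lemma cond_prob_le_1:
  assumes "\<And>k. 0 \<le> \<mu> k"
  shows "cond_prob \<mu> n P \<le> 1"
proof -
  let ?num = "\<Sum>t\<in>{t. tsize t = n \<and> P t}. bw_weight \<mu> t"
  have num_le: "?num \<le> size_prob \<mu> n"
    unfolding size_prob_def
    using finite_tsize_eq[of n "\<lambda>_. True"] by (intro sum_mono2) (auto intro: bw_weight_nonneg assms)
  have "0 \<le> ?num"
    by (intro sum_nonneg) (auto intro: bw_weight_nonneg assms)
  show ?thesis
  proof (cases "size_prob \<mu> n = 0")
    case False
    with num_le \<open>0 \<le> ?num\<close> have "0 < size_prob \<mu> n"
      by linarith
    with num_le show ?thesis
      by (simp add: cond_prob_def)
  qed (simp add: cond_prob_def)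
qed

lemma sum_union_le:
  fixes g :: "'a \<Rightarrow> 'b::ordered_ab_group_add"
  assumes "finite A" "finite B" "\<And>x. 0 \<le> g x"
  shows "sum g (A \<union> B) \<le> sum g A + sum g B"
  using sum_Un[OF assms(1,2), of g] sum_nonneg[of "A \<inter> B" g] assms(3) by simp

lemma exists_good_proportion:
  fixes g b :: "'a \<Rightarrow> real"
  assumes W: "finite W" and nonneg: "\<And>n. 0 \<le> g n" "\<And>n. 0 \<le> b n"
    and R: "sum b W \<le> R" and G: "G \<le> sum g W" "0 < G"
  shows "\<exists>n\<in>W. 0 < g n \<and> G / (G + R) \<le> g n / (g n + b n)"
proof (rule ccontr)
  assume contra: "\<not> ?thesis"
  have R_nonneg: "0 \<le> R"
    using R sum_nonneg[of W b] nonneg(2) by (meson order_trans)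
  have less: "R * g n < G * b n" if "n \<in> W" "0 < g n" for n
  proof -
    have "g n / (g n + b n) < G / (G + R)"
      using contra that by auto
    then show ?thesis
      using that G(2) R_nonneg nonneg(2)[of n] by (simp add: divide_simps algebra_simps)
  qed
  have le: "R * g n \<le> G * b n" if "n \<in> W" for n
    using less[OF that] nonneg[of n] G(2) by (cases "g n = 0") (auto intro: less_imp_le)
  obtain n0 where "n0 \<in> W" "0 < g n0"
    using G sum_nonpos[of W g] nonneg(1) by (metis le_less_trans not_le order.strict_iff_order)
  then have "(\<Sum>n\<in>W. R * g n) < (\<Sum>n\<in>W. G * b n)"
    using le less by (intro sum_strict_mono_ex1[OF W]) auto
  then have "R * sum g W < G * R"
    using mult_left_mono[OF R less_imp_le[OF G(2)]] by (simp add: sum_distrib_left[symmetric])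
  moreover have "R * G \<le> R * sum g W"
    using R_nonneg G by (simp add: mult_left_mono)
  ultimately show False
    by (simp add: mult.commute)
qed

context truncated_offspring
begin

lemma sum_tsize_ge_le_size_moment2:
  assumes "0 < c"
  shows "(\<Sum>t\<in>{t \<in> bounded_trees D h. c \<le> real (tsize t)}. bw t) \<le> size_moment2 h / c\<^sup>2"
proof -
  have "(\<Sum>t\<in>{t \<in> bounded_trees D h. c \<le> real (tsize t)}. bw t)
      \<le> (\<Sum>t\<in>{t \<in> bounded_trees D h. c \<le> real (tsize t)}. bw t * (real (tsize t))\<^sup>2 / c\<^sup>2)"
  proof (intro sum_mono)
    fix t assume "t \<in> {t \<in> bounded_trees D h. c \<le> real (tsize t)}"
    then have "1 \<le> (real (tsize t))\<^sup>2 / c\<^sup>2"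
      using assms by (simp add: le_divide_eq power_mono)
    then show "bw t \<le> bw t * (real (tsize t))\<^sup>2 / c\<^sup>2"
      using mult_left_mono[OF _ bw_nonneg[of t]] by fastforce
  qed
  also have "\<dots> \<le> (\<Sum>t\<in>bounded_trees D h. bw t * (real (tsize t))\<^sup>2 / c\<^sup>2)"
    by (intro sum_mono2 finite_bounded_trees) (auto simp: bw_nonneg)
  also have "\<dots> = size_moment2 h / c\<^sup>2"
    by (simp add: size_moment2_def sum_divide_distrib)
  finally show ?thesis .
qed

lemma sum_prod_list_small_total_size_ge:
  assumes "0 < B"
  shows "(\<Sum>ts\<in>{ts \<in> lists_of_length d (bounded_trees D h). sum_list (map tsize ts) < B}.
      prod_list (map bw ts)) \<ge> mass h ^ d - d * size_moment1 h / B"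
proof -
  let ?L = "lists_of_length d (bounded_trees D h)"
  let ?Y = "{ts \<in> ?L. sum_list (map tsize ts) < B}"
  let ?S = "\<lambda>ts. sum_list (map (\<lambda>t. real (tsize t)) ts)"
  have fin: "finite ?L"
    by (intro finite_lists_of_length finite_bounded_trees)
  have prod_nonneg: "0 \<le> prod_list (map bw ts)" for ts
    by (intro prod_list_nonneg) (auto simp: bw_nonneg)
  have "(\<Sum>ts\<in>?L - ?Y. prod_list (map bw ts)) \<le> (\<Sum>ts\<in>?L - ?Y. prod_list (map bw ts) * ?S ts / B)"
  proof (intro sum_mono)
    fix ts assume "ts \<in> ?L - ?Y"
    then have "B \<le> sum_list (map tsize ts)"
      by auto
    then have "1 \<le> ?S ts / B"
      using assms by (simp add: real_sum_list_tsize le_divide_eq)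
    then show "prod_list (map bw ts) \<le> prod_list (map bw ts) * ?S ts / B"
      using mult_left_mono[OF _ prod_nonneg] by fastforce
  qed
  also have "\<dots> \<le> (\<Sum>ts\<in>?L. prod_list (map bw ts) * ?S ts) / B"
    unfolding sum_divide_distrib
    using fin prod_nonneg assms by (intro sum_mono2) (auto intro!: divide_nonneg_nonneg mult_nonneg_nonneg sum_list_nonneg)
  also have "\<dots> \<le> d * size_moment1 h / B"
    unfolding size_moment1_def
    by (intro divide_right_mono sum_lists_of_length_bounded_trees_le) auto
  finally have "(\<Sum>ts\<in>?L - ?Y. prod_list (map bw ts)) \<le> d * size_moment1 h / B" .
  moreover have "(\<Sum>ts\<in>?L. prod_list (map bw ts)) = mass h ^ d"
    unfolding mass_def by (simp add: sum_prod_list_lists_of_length finite_bounded_trees)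
  moreover have "(\<Sum>ts\<in>?L - ?Y. prod_list (map bw ts))
      = (\<Sum>ts\<in>?L. prod_list (map bw ts)) - (\<Sum>ts\<in>?Y. prod_list (map bw ts))"
    using fin by (intro sum_diff) auto
  ultimately show ?thesis
    by linarith
qed

end


section \<open>A window of sizes in which most trees are short and wide\<close>

text \<open>Trees with \<open>K < n \<le> B\<close> vertices are compared with two truncations of \<open>\<mu>\<close>: below the
  outdegree \<open>K\<close> (where trees with more than \<open>K\<close> vertices are rare by the second moment of the size),
  and below \<open>D2 \<ge> B\<close> (which keeps every tree of size at most \<open>B\<close>, and where height at least \<open>h\<close> is
  rare).\<close>

locale size_window =
  small: truncated_offspring \<mu> K + large: truncated_offspring \<mu> D2
  for \<mu> :: "nat \<Rightarrow> real" and K D2 :: nat +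
  fixes B h :: nat and f :: "nat \<Rightarrow> real"
  assumes K_less_B: "K < B" and B_le_D2: "B \<le> D2"
    and small_mean_less_1: "small.mean < 1" and large_mean_less_1: "large.mean < 1"
    and wide: "\<And>n. K < n \<Longrightarrow> n \<le> B \<Longrightarrow> 0 < f n \<and> real n < real K * f n"
    and high: "\<And>n. K < n \<Longrightarrow> n \<le> B \<Longrightarrow> real h \<le> f n * ln (real n)"
begin

definition "good n t \<longleftrightarrow> K \<le> max_outdeg t \<and> real (theight t) < f n * ln (real n)"
definition "good_weight n = (\<Sum>t\<in>{t. tsize t = n \<and> good n t}. bw_weight \<mu> t)"
definition "bad_weight n = (\<Sum>t\<in>{t. tsize t = n \<and> \<not> good n t}. bw_weight \<mu> t)"
definition "tall = {t \<in> bounded_trees D2 B. h \<le> theight t}"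

text \<open>\<open>good_bound\<close> is a lower bound for the weight of the trees whose root has exactly \<open>K\<close>
  children, all with outdegrees below \<open>K\<close> and total size below \<open>B\<close>, minus the tall ones;
  \<open>bad_bound\<close> adds the tall trees to a second-moment bound for trees with all outdegrees below \<open>K\<close>
  and more than \<open>K\<close> vertices.\<close>

definition "good_bound = \<mu> K * (1 - real K * (small.defect / (1 - small.mean) + small.mean ^ B)
    - real K * (1 / (1 - small.mean)) / real B) - large.mean ^ h"
definition "bad_bound = (1 + 2 * small.mean * (1 / (1 - small.mean))
    + small.factorial_moment2 * (1 / (1 - small.mean))\<^sup>2) / (1 - small.mean) / (real K + 1)\<^sup>2
    + large.mean ^ h"

lemma good_weight_nonneg: "0 \<le> good_weight n"
  unfolding good_weight_def by (intro sum_nonneg small.bw_nonneg)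

lemma bad_weight_nonneg: "0 \<le> bad_weight n"
  unfolding bad_weight_def by (intro sum_nonneg small.bw_nonneg)

lemma size_prob_eq: "size_prob \<mu> n = good_weight n + bad_weight n"
proof -
  have "{t. tsize t = n} = {t. tsize t = n \<and> good n t} \<union> {t. tsize t = n \<and> \<not> good n t}"
    by auto
  then show ?thesis
    unfolding size_prob_def good_weight_def bad_weight_def
    by (simp add: sum.union_disjoint[symmetric] finite_tsize_eq disjoint_iff)
qed

lemma finite_tall: "finite tall"
  unfolding tall_def using finite_bounded_trees by simp

lemma tall_weight_le: "(\<Sum>t\<in>tall. bw_weight \<mu> t) \<le> large.mean ^ h"
  using large.height_tail_le[of B h] unfolding large.height_tail_def tall_def .

lemma tall_if_not_short:
  assumes "K < tsize t" "tsize t \<le> B" "\<not> real (theight t) < f (tsize t) * ln (real (tsize t))"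
  shows "t \<in> tall"
  using high[of "tsize t"] assms B_le_D2 tsize_le_imp_bounded_trees[of t B D2]
  by (auto simp: tall_def)

lemma bad_weight_sum_le: "(\<Sum>n\<in>{K<..B}. bad_weight n) \<le> bad_bound"
proof -
  let ?thin = "{t \<in> bounded_trees K B. real K + 1 \<le> real (tsize t)}"
  have "{t. tsize t \<in> {K<..B} \<and> \<not> good (tsize t) t} \<subseteq> ?thin \<union> tall"
  proof
    fix t assume t: "t \<in> {t. tsize t \<in> {K<..B} \<and> \<not> good (tsize t) t}"
    show "t \<in> ?thin \<union> tall"
    proof (cases "K \<le> max_outdeg t")
      case False
      then show ?thesis
        using t theight_less_tsize[of t] by (auto simp: bounded_trees_def)
    qed (use t tall_if_not_short in \<open>auto simp: good_def\<close>)
  qed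
  then have "(\<Sum>n\<in>{K<..B}. bad_weight n) \<le> (\<Sum>t\<in>?thin \<union> tall. bw_weight \<mu> t)"
    unfolding bad_weight_def
    using finite_bounded_trees finite_tall
    by (subst sum_group_tsize) (auto intro!: sum_mono2 small.bw_nonneg)
  also have "\<dots> \<le> (\<Sum>t\<in>?thin. bw_weight \<mu> t) + (\<Sum>t\<in>tall. bw_weight \<mu> t)"
    using finite_bounded_trees finite_tall by (intro sum_union_le small.bw_nonneg) auto
  also have "\<dots> \<le> small.size_moment2 B / (real K + 1)\<^sup>2 + large.mean ^ h"
    using small.sum_tsize_ge_le_size_moment2[of "real K + 1" B] tall_weight_le by simp
  also have "\<dots> \<le> bad_bound"
    unfolding bad_bound_def
    using small.size_moment2_le[OF small_mean_less_1] by (intro add_mono divide_right_mono) auto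
  finally show ?thesis .
qed

definition "short_bushy_children =
  {ts \<in> lists_of_length K (bounded_trees K B). sum_list (map tsize ts) < B}"

lemma short_bushy_children_weight_ge:
  "1 - real K * (small.defect / (1 - small.mean) + small.mean ^ B) - real K * (1 / (1 - small.mean)) / real B
    \<le> (\<Sum>ts\<in>short_bushy_children. prod_list (map (bw_weight \<mu>) ts))"
proof -
  have "1 - real K * (small.defect / (1 - small.mean) + small.mean ^ B) \<le> 1 - real K * (1 - small.mass B)"
    using small.one_minus_mass_le[OF small_mean_less_1, of B] by (simp add: mult_left_mono)
  also have "\<dots> \<le> small.mass B ^ K"
    using Bernoulli_inequality[of "small.mass B - 1" K] small.mass_nonneg[of B] by (simp add: algebra_simps)
  finally have "1 - real K * (small.defect / (1 - small.mean) + small.mean ^ B) \<le> small.mass B ^ K" .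
  moreover have "real K * small.size_moment1 B / real B \<le> real K * (1 / (1 - small.mean)) / real B"
    using small.size_moment1_le[OF small_mean_less_1] by (intro divide_right_mono mult_left_mono) auto
  moreover have "small.mass B ^ K - real K * small.size_moment1 B / real B
      \<le> (\<Sum>ts\<in>short_bushy_children. prod_list (map (bw_weight \<mu>) ts))"
    unfolding short_bushy_children_def using K_less_B by (intro small.sum_prod_list_small_total_size_ge) simp
  ultimately show ?thesis
    by linarith
qed

lemma good_or_tall_if_short_bushy: "ts \<in> short_bushy_children \<Longrightarrow>
    Node ts \<in> {t. tsize t \<in> {K<..B} \<and> good (tsize t) t} \<union> tall"
proof -
  assume "ts \<in> short_bushy_children"
  then have len: "length ts = K" and small: "tsize (Node ts) \<le> B"
    by (auto simp: short_bushy_children_def lists_of_length_def)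
  then have "K < tsize (Node ts)"
    using length_le_sum_tsize[of ts] by simp
  moreover have "K \<le> max_outdeg (Node ts)"
    using len by simp
  ultimately show ?thesis
    using small tall_if_not_short[of "Node ts"]
    by (auto simp: good_def simp del: tsize.simps theight.simps max_outdeg.simps)
qed

lemma good_bound_le_good_weight_sum: "good_bound \<le> (\<Sum>n\<in>{K<..B}. good_weight n)"
proof -
  let ?good = "{t. tsize t \<in> {K<..B} \<and> good (tsize t) t}"
  have fin_good: "finite ?good"
    by (rule finite_subset[OF _ finite_tsize_le[of B]]) auto
  have "good_bound \<le> \<mu> K * (\<Sum>ts\<in>short_bushy_children. prod_list (map (bw_weight \<mu>) ts)) - large.mean ^ h"
    unfolding good_bound_def
    using short_bushy_children_weight_ge small.nonneg[of K] by (intro diff_mono mult_left_mono) auto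
  also have "\<mu> K * (\<Sum>ts\<in>short_bushy_children. prod_list (map (bw_weight \<mu>) ts))
      = (\<Sum>t\<in>Node ` short_bushy_children. bw_weight \<mu> t)"
    by (subst sum.reindex) (auto simp: inj_on_def sum_distrib_left short_bushy_children_def
        lists_of_length_def)
  also have "\<dots> \<le> (\<Sum>t\<in>?good \<union> tall. bw_weight \<mu> t)"
  proof (rule sum_mono2)
    show "Node ` short_bushy_children \<subseteq> ?good \<union> tall"
      using good_or_tall_if_short_bushy by blast
  qed (use fin_good finite_tall in \<open>auto simp: small.bw_nonneg\<close>)
  also have "\<dots> \<le> (\<Sum>t\<in>?good. bw_weight \<mu> t) + (\<Sum>t\<in>tall. bw_weight \<mu> t)"
    by (rule sum_union_le[OF fin_good finite_tall small.bw_nonneg])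
  also have "\<dots> \<le> (\<Sum>t\<in>?good. bw_weight \<mu> t) + large.mean ^ h"
    using tall_weight_le by linarith
  also have "(\<Sum>t\<in>?good. bw_weight \<mu> t) = (\<Sum>n\<in>{K<..B}. good_weight n)"
    unfolding good_weight_def by (rule sum_group_tsize[symmetric]) simp
  finally show ?thesis
    by simp
qed

lemma exists_size_good_proportion:
  assumes "0 < good_bound"
  shows "\<exists>n. K < n \<and> n \<le> B \<and> 0 < size_prob \<mu> n
    \<and> good_bound / (good_bound + bad_bound) \<le> cond_prob \<mu> n (\<lambda>t. real (theight t) < f n * ln (real n))
    \<and> good_bound / (good_bound + bad_bound) \<le> cond_prob \<mu> n (\<lambda>t. real (twidth t) > real n / f n)"
proof -
  obtain n where n: "n \<in> {K<..B}" "0 < good_weight n"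
    and ratio: "good_bound / (good_bound + bad_bound) \<le> good_weight n / (good_weight n + bad_weight n)"
    using exists_good_proportion[OF _ good_weight_nonneg bad_weight_nonneg bad_weight_sum_le
        good_bound_le_good_weight_sum assms] by auto
  have pos: "0 < size_prob \<mu> n"
    using n(2) bad_weight_nonneg[of n] by (simp add: size_prob_eq)
  have good_le_cond_prob: "good_bound / (good_bound + bad_bound) \<le> cond_prob \<mu> n P"
    if "\<And>t. good n t \<Longrightarrow> P t" for P
  proof -
    have "good_weight n \<le> (\<Sum>t\<in>{t. tsize t = n \<and> P t}. bw_weight \<mu> t)"
      unfolding good_weight_def using that by (intro sum_mono2 finite_tsize_eq) (auto simp: small.bw_nonneg)
    then have "good_weight n / size_prob \<mu> n \<le> cond_prob \<mu> n P"
      unfolding cond_prob_def using pos by (intro divide_right_mono) auto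
    with ratio show ?thesis
      by (simp add: size_prob_eq)
  qed
  have "real n / f n < real (twidth t)" if "good n t" for t
  proof -
    have "real n / f n < real K"
      using wide[of n] n(1) by (simp add: divide_less_eq)
    also have "real K \<le> real (twidth t)"
      using that max_outdeg_le_twidth[of t] by (simp add: good_def)
    finally show ?thesis .
  qed
  then show ?thesis
    using n(1) pos good_le_cond_prob by (auto simp: good_def)
qed

end


lemma one_minus_power_le_inverse:
  fixes y :: real
  assumes "0 \<le> y" "y \<le> 1"
  shows "(1 - y) ^ n \<le> 1 / (1 + n * y)"
proof -
  have "(1 - y) ^ n * (1 + n * y) \<le> (1 - y) ^ n * (1 + y) ^ n"
    using Bernoulli_inequality[of y n] assms by (intro mult_left_mono) auto
  also have "\<dots> = (1 - y\<^sup>2) ^ n"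
    by (simp add: power_mult_distrib[symmetric] power2_eq_square algebra_simps)
  also have "\<dots> \<le> 1"
    using assms by (intro power_le_one) (auto simp: power_le_one)
  finally show ?thesis
    using assms by (simp add: le_divide_eq add_pos_nonneg)
qed

lemma ratio_le_proportion:
  fixes G R J :: real
  assumes "0 < G" "0 \<le> R" "J * R \<le> G" "0 < J"
  shows "J / (J + 1) \<le> G / (G + R)"
proof -
  have "J * (G + R) \<le> G * (J + 1)"
    using assms by (simp add: algebra_simps)
  then show ?thesis
    using assms by (simp add: divide_simps mult.commute)
qed

text \<open>The two bounds below are evaluated at a window where the truncated mean is \<open>1 - x\<close>,
  \<open>\<mu> K = x / (2 K)\<close> and \<open>B x\<^sup>3 = K\<close>; here \<open>k\<close> stands for \<open>K\<close>, \<open>kn\<close> for the next support point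
  and \<open>tail\<close> for the height tail of the large truncation.\<close>

lemma window_good_bound_ge:
  fixes x k kn \<tau> B mB tail :: real
  assumes x: "0 < x" "x \<le> 1/4" and big: "16 \<le> x * k" and kn: "4 * k \<le> kn"
    and \<tau>: "0 \<le> \<tau>" "\<tau> \<le> x / (2 * k) + x / (2 * kn)"
    and B: "B * x ^ 3 = k"
    and mB: "0 \<le> mB" "mB \<le> 1 / (1 + B * x)"
    and tail: "tail \<le> 1 / k\<^sup>2"
  shows "x / (16 * k) \<le> x / (2 * k) * (1 - k * (\<tau> / x + mB) - k * (1 / x) / B) - tail"
proof -
  have "0 < x * k"
    using big by linarith
  then have k_pos: "0 < k"
    using x by (simp add: zero_less_mult_iff)
  have kn_pos: "0 < kn"
    using kn k_pos by linarith
  have B_pos: "0 < B"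
    using B k_pos x by (metis zero_less_mult_pos2 zero_less_power)
  have defect_term: "k * (\<tau> / x) \<le> 5/8"
  proof -
    have "k * (\<tau> / x) \<le> k * ((x / (2 * k) + x / (2 * kn)) / x)"
      using \<tau> x k_pos by (intro mult_left_mono divide_right_mono) auto
    also have "\<dots> = 1/2 + k / (2 * kn)"
      using x k_pos kn_pos by (simp add: field_simps)
    also have "k / (2 * kn) \<le> 1/8"
      using kn kn_pos by (simp add: divide_simps)
    finally show ?thesis
      by simp
  qed
  have height_term: "k * mB \<le> x\<^sup>2"
  proof -
    have "k * mB \<le> k * (1 / (1 + B * x))"
      using mB k_pos by (intro mult_left_mono) auto
    also have "B * x = k / x\<^sup>2"
      using B x by (simp add: field_simps power3_eq_cube power2_eq_square)
    also have "k * (1 / (1 + k / x\<^sup>2)) \<le> x\<^sup>2"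
      using x k_pos by (simp add: divide_simps power2_eq_square)
    finally show ?thesis .
  qed
  have size_term: "k * (1 / x) / B = x\<^sup>2"
    using B x B_pos by (simp add: field_simps power3_eq_cube power2_eq_square)
  have "x\<^sup>2 \<le> (1/4)\<^sup>2"
    using x by (intro power_mono) auto
  then have "x\<^sup>2 \<le> 1/16"
    by (simp add: power2_eq_square)
  moreover have "k * (\<tau> / x + mB) = k * (\<tau> / x) + k * mB"
    by (simp add: distrib_left)
  ultimately have "1/4 \<le> 1 - k * (\<tau> / x + mB) - k * (1 / x) / B"
    using defect_term height_term size_term by linarith
  then have "x / (2 * k) * (1/4) \<le> x / (2 * k) * (1 - k * (\<tau> / x + mB) - k * (1 / x) / B)"
    using x k_pos by (intro mult_left_mono) auto
  moreover have "1 / k\<^sup>2 \<le> x / (16 * k)"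
    using big k_pos by (simp add: divide_simps power2_eq_square)
  ultimately show ?thesis
    using tail by (simp add: field_simps)
qed

lemma window_bad_bound_le:
  fixes x k k' V tail :: real
  assumes x: "0 < x" "x \<le> 1/4" and k: "0 < k" and V: "0 \<le> V" "V \<le> k'"
    and tail: "tail \<le> 1 / k\<^sup>2"
  shows "(1 + 2 * (1 - x) * (1 / x) + V * (1 / x)\<^sup>2) / x / (k + 1)\<^sup>2 + tail
    \<le> 2 * (k' + 2) / (x ^ 3 * k\<^sup>2)"
proof -
  have "x ^ 3 \<le> 1"
    using x by (simp add: power_le_one)
  then have one_le: "1 \<le> (k' + 2) / x ^ 3"
    using x V by (simp add: le_divide_eq)
  have "1 + 2 * (1 - x) * (1 / x) + V * (1 / x)\<^sup>2 \<le> 1 + 2 / x + k' / x\<^sup>2"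
    using x V by (intro add_mono) (auto simp: divide_simps)
  also have "\<dots> = (x\<^sup>2 + 2 * x + k') / x\<^sup>2"
    using x by (simp add: field_simps power2_eq_square)
  also have "\<dots> \<le> (k' + 2) / x\<^sup>2"
    using x mult_mono[of x 1 x 1] by (intro divide_right_mono) (auto simp: power2_eq_square)
  finally have "(1 + 2 * (1 - x) * (1 / x) + V * (1 / x)\<^sup>2) / x \<le> (k' + 2) / x\<^sup>2 / x"
    using x by (intro divide_right_mono) auto
  also have "\<dots> = (k' + 2) / x ^ 3"
    by (simp add: power3_eq_cube power2_eq_square)
  finally have "(1 + 2 * (1 - x) * (1 / x) + V * (1 / x)\<^sup>2) / x / (k + 1)\<^sup>2 + tail
      \<le> (k' + 2) / x ^ 3 / (k + 1)\<^sup>2 + 1 / k\<^sup>2"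
    using tail by (intro add_mono divide_right_mono) auto
  also have "\<dots> \<le> (k' + 2) / x ^ 3 / k\<^sup>2 + (k' + 2) / x ^ 3 / k\<^sup>2"
    using k one_le by (intro add_mono divide_left_mono divide_right_mono power_mono) auto
  finally show ?thesis
    by (simp add: field_simps)
qed


section \<open>The offspring distribution\<close>

definition threshold :: "(nat \<Rightarrow> real) \<Rightarrow> real \<Rightarrow> nat" where
  "threshold f c = (LEAST N. \<forall>n\<ge>N. c \<le> f n)"

lemma le_of_threshold_le:
  assumes "filterlim f at_top sequentially" "threshold f c \<le> n"
  shows "c \<le> f n"
proof -
  have "\<exists>N. \<forall>n\<ge>N. c \<le> f n"
    using assms(1) by (simp add: filterlim_at_top eventually_sequentially)
  then have "\<forall>n\<ge>threshold f c. c \<le> f n"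
    unfolding threshold_def by (rule LeastI_ex)
  with assms(2) show ?thesis
    by auto
qed

text \<open>Each positive support point \<open>supp_deg f j\<close> is so much larger than the previous one that \<open>f\<close>
  exceeds \<open>16 ^ j\<close> beyond it; it is a power of 3 so that \<open>ln (supp_deg f j) \<ge> supp_exp f j\<close>.\<close>

fun supp_exp :: "(nat \<Rightarrow> real) \<Rightarrow> nat \<Rightarrow> nat" where
  "supp_exp f 0 = 1"
| "supp_exp f (Suc j) = threshold f (16 ^ Suc j) + 32 * Suc j * 16 ^ Suc j * (3 ^ supp_exp f j + 2)"

definition supp_deg :: "(nat \<Rightarrow> real) \<Rightarrow> nat \<Rightarrow> nat" where
  "supp_deg f j = 3 ^ supp_exp f j"

definition geo_weight :: "nat \<Rightarrow> real" where
  "geo_weight i = (1/2) ^ Suc i"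

definition positive_mass :: "(nat \<Rightarrow> real) \<Rightarrow> real" where
  "positive_mass f = (\<Sum>i. geo_weight i / real (supp_deg f i))"

text \<open>Each atom \<open>supp_deg f i\<close> contributes \<open>geo_weight i\<close> to the mean, so the mean is 1.\<close>

definition offspring :: "(nat \<Rightarrow> real) \<Rightarrow> nat \<Rightarrow> real" where
  "offspring f d = (if d = 0 then 1 - positive_mass f
    else if d \<in> range (supp_deg f) then geo_weight (inv (supp_deg f) d) / real d else 0)"

lemma supp_exp_le_supp_deg: "supp_exp f j \<le> supp_deg f j"
proof -
  have "supp_exp f j < 2 ^ supp_exp f j"
    by (rule less_exp)
  also have "(2::nat) ^ supp_exp f j \<le> 3 ^ supp_exp f j"
    by (intro power_mono) auto
  finally show ?thesis
    by (simp add: supp_deg_def)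
qed

lemma supp_deg_Suc_ge: "32 * Suc j * 16 ^ Suc j * (supp_deg f j + 2) \<le> supp_deg f (Suc j)"
proof -
  have "32 * Suc j * 16 ^ Suc j * (supp_deg f j + 2) \<le> supp_exp f (Suc j)"
    unfolding supp_exp.simps supp_deg_def by (rule le_add2)
  then show ?thesis
    using supp_exp_le_supp_deg le_trans by blast
qed

lemma threshold_le_supp_deg_Suc: "threshold f (16 ^ Suc j) \<le> supp_deg f (Suc j)"
proof -
  have "threshold f (16 ^ Suc j) \<le> supp_exp f (Suc j)"
    unfolding supp_exp.simps by (rule le_add1)
  then show ?thesis
    using supp_exp_le_supp_deg le_trans by blast
qed

lemma supp_exp_pos: "0 < supp_exp f j"
  by (cases j) auto

lemma three_le_supp_deg: "3 \<le> supp_deg f j"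
  using power_increasing[of 1 "supp_exp f j" "3::nat"] supp_exp_pos[of f j] by (simp add: supp_deg_def)

lemma supp_deg_pos: "0 < supp_deg f j"
  using three_le_supp_deg[of f j] by linarith

lemma strict_mono_supp_deg: "strict_mono (supp_deg f)"
proof (rule strict_monoI_Suc)
  fix j
  have "1 * (supp_deg f j + 2) \<le> 32 * Suc j * 16 ^ Suc j * (supp_deg f j + 2)"
    by (rule mult_le_mono1) simp
  then show "supp_deg f j < supp_deg f (Suc j)"
    using supp_deg_Suc_ge[of j f] by simp
qed

lemma inj_supp_deg: "inj (supp_deg f)"
  using strict_mono_supp_deg strict_mono_imp_inj_on by blast

lemma zero_notin_range_supp_deg: "0 \<notin> range (supp_deg f)"
  using supp_deg_pos[of f] by (metis less_irrefl rangeE)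

lemma geo_weight_sums: "geo_weight sums 1"
proof -
  have "(\<lambda>i. (1/2::real) * (1/2) ^ i) sums ((1/2) * (1 / (1 - 1/2)))"
    by (intro sums_mult geometric_sums) auto
  then show ?thesis
    by (simp add: geo_weight_def[abs_def])
qed

lemma sum_geo_weight: "(\<Sum>i<J. geo_weight i) = 1 - (1/2) ^ J"
  by (induction J) (auto simp: geo_weight_def)

lemma geo_weight_nonneg: "0 \<le> geo_weight i"
  by (simp add: geo_weight_def)

lemma atom_mass_le_geo_weight: "geo_weight i / real (supp_deg f i) \<le> geo_weight i"
  using geo_weight_nonneg[of i] three_le_supp_deg[of f i] by (simp add: divide_le_eq mult_le_cancel_left1)

lemma summable_atom_mass: "summable (\<lambda>i. geo_weight i / real (supp_deg f i))"
  using atom_mass_le_geo_weight geo_weight_nonneg supp_deg_pos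
  by (intro summable_comparison_test[OF _ sums_summable[OF geo_weight_sums]]) auto

lemma positive_mass_le_1: "positive_mass f \<le> 1"
proof -
  have "positive_mass f \<le> (\<Sum>i. geo_weight i)"
    unfolding positive_mass_def
    by (intro suminf_le summable_atom_mass sums_summable[OF geo_weight_sums] atom_mass_le_geo_weight)
  then show ?thesis
    using sums_unique[OF geo_weight_sums] by simp
qed

lemma offspring_supp_deg: "offspring f (supp_deg f i) = geo_weight i / real (supp_deg f i)"
  using supp_deg_pos[of f i] by (simp add: offspring_def inv_f_f[OF inj_supp_deg])

lemma supp_deg_times_offspring: "real (supp_deg f i) * offspring f (supp_deg f i) = geo_weight i"
  using supp_deg_pos[of f i] by (simp add: offspring_supp_deg)

lemma offspring_0: "offspring f 0 = 1 - positive_mass f"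
  by (simp add: offspring_def)

lemma offspring_eq_0: "d \<noteq> 0 \<Longrightarrow> d \<notin> range (supp_deg f) \<Longrightarrow> offspring f d = 0"
  by (simp add: offspring_def)

lemma offspring_nonneg: "0 \<le> offspring f d"
  unfolding offspring_def using positive_mass_le_1[of f] geo_weight_nonneg by auto


lemma sum_below_supp_deg:
  assumes "\<And>d. d \<noteq> 0 \<Longrightarrow> d \<notin> range (supp_deg f) \<Longrightarrow> F d = 0"
  shows "(\<Sum>d<supp_deg f J. F d) = F 0 + (\<Sum>i<J. F (supp_deg f i))"
proof -
  have sub: "insert 0 (supp_deg f ` {..<J}) \<subseteq> {..<supp_deg f J}"
    using supp_deg_pos[of f J] strict_mono_less[OF strict_mono_supp_deg] by auto
  have "F d = 0" if "d \<in> {..<supp_deg f J} - insert 0 (supp_deg f ` {..<J})" for d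
  proof (cases "d \<in> range (supp_deg f)")
    case True
    then obtain i where "d = supp_deg f i"
      by auto
    with that show ?thesis
      using strict_mono_less[OF strict_mono_supp_deg] by auto
  qed (use that assms in auto)
  then have "(\<Sum>d<supp_deg f J. F d) = (\<Sum>d\<in>insert 0 (supp_deg f ` {..<J}). F d)"
    by (intro sum.mono_neutral_right) (use sub in auto)
  also have "\<dots> = F 0 + (\<Sum>i<J. F (supp_deg f i))"
    using zero_notin_range_supp_deg[of f] inj_on_subset[OF inj_supp_deg]
    by (subst sum.insert) (auto simp: sum.reindex)
  finally show ?thesis .
qed

lemma sum_offspring_below_supp_deg:
  "(\<Sum>d<supp_deg f J. offspring f d) = 1 - positive_mass f + (\<Sum>i<J. geo_weight i / real (supp_deg f i))"
  by (subst sum_below_supp_deg) (auto simp: offspring_eq_0 offspring_0 offspring_supp_deg)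

lemma sum_offspring_below_supp_deg_le_1: "(\<Sum>d<supp_deg f J. offspring f d) \<le> 1"
proof -
  have "(\<Sum>i<J. geo_weight i / real (supp_deg f i)) \<le> positive_mass f"
    unfolding positive_mass_def using summable_atom_mass geo_weight_nonneg
    by (intro sum_le_suminf) auto
  then show ?thesis
    by (simp add: sum_offspring_below_supp_deg)
qed

lemma mean_offspring_below_supp_deg: "(\<Sum>d<supp_deg f J. real d * offspring f d) = 1 - (1/2) ^ J"
proof -
  have "(\<Sum>d<supp_deg f J. real d * offspring f d) = (\<Sum>i<J. geo_weight i)"
    by (subst sum_below_supp_deg) (auto simp: offspring_eq_0 supp_deg_times_offspring)
  then show ?thesis
    by (simp add: sum_geo_weight)
qed

lemma factorial_moment2_offspring_below_supp_deg:
  "(\<Sum>d<supp_deg f (Suc j). real d * (real d - 1) * offspring f d) \<le> real (supp_deg f j)"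
proof -
  have atom: "real (supp_deg f i) * (real (supp_deg f i) - 1) * offspring f (supp_deg f i)
      = (real (supp_deg f i) - 1) * geo_weight i" for i
  proof -
    have "real (supp_deg f i) * (real (supp_deg f i) - 1) * offspring f (supp_deg f i)
        = (real (supp_deg f i) - 1) * (real (supp_deg f i) * offspring f (supp_deg f i))"
      by (simp only: mult_ac)
    then show ?thesis
      by (simp only: supp_deg_times_offspring)
  qed
  have "(\<Sum>d<supp_deg f (Suc j). real d * (real d - 1) * offspring f d)
      = (\<Sum>i<Suc j. (real (supp_deg f i) - 1) * geo_weight i)"
    by (subst sum_below_supp_deg) (auto simp: offspring_eq_0 atom)
  also have "\<dots> \<le> (\<Sum>i<Suc j. real (supp_deg f j) * geo_weight i)"
  proof (intro sum_mono mult_right_mono geo_weight_nonneg)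
    fix i assume "i \<in> {..<Suc j}"
    then have "supp_deg f i \<le> supp_deg f j"
      using strict_mono_less_eq[OF strict_mono_supp_deg[of f]] by simp
    then show "real (supp_deg f i) - 1 \<le> real (supp_deg f j)"
      by linarith
  qed
  also have "\<dots> = real (supp_deg f j) * (1 - (1/2) ^ Suc j)"
    by (simp only: sum_distrib_left[symmetric] sum_geo_weight)
  also have "\<dots> \<le> real (supp_deg f j)"
    by (simp add: mult_left_le)
  finally show ?thesis .
qed

lemma geo_weight_tail_sums: "(\<lambda>n. geo_weight (Suc n + J)) sums geo_weight J"
proof -
  have "(\<lambda>n. (1/2::real) ^ (J + 2) * (1/2) ^ n) sums ((1/2) ^ (J + 2) * (1 / (1 - 1/2)))"
    by (intro sums_mult geometric_sums) auto
  moreover have "(\<lambda>n. (1/2::real) ^ (J + 2) * (1/2) ^ n) = (\<lambda>n. geo_weight (Suc n + J))"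
    by (simp add: geo_weight_def power_add[symmetric] algebra_simps)
  ultimately show ?thesis
    by (simp add: geo_weight_def)
qed

lemma defect_offspring_below_supp_deg:
  "1 - (\<Sum>d<supp_deg f J. offspring f d)
    \<le> geo_weight J / real (supp_deg f J) + geo_weight J / real (supp_deg f (Suc J))"
proof -
  let ?g = "\<lambda>i. geo_weight i / real (supp_deg f i)"
  have tail: "summable (\<lambda>n. ?g (n + J))"
    using summable_atom_mass by (rule summable_ignore_initial_segment)
  have "1 - (\<Sum>d<supp_deg f J. offspring f d) = (\<Sum>n. ?g (n + J))"
    using suminf_split_initial_segment[OF summable_atom_mass[of f], of J]
    by (simp add: sum_offspring_below_supp_deg positive_mass_def)
  also have "\<dots> = ?g J + (\<Sum>n. ?g (Suc n + J))"
    using suminf_split_head[OF tail] by simp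
  also have "(\<Sum>n. ?g (Suc n + J)) \<le> (\<Sum>n. geo_weight (Suc n + J) / real (supp_deg f (Suc J)))"
  proof (rule suminf_le)
    fix n
    have "supp_deg f (Suc J) \<le> supp_deg f (Suc n + J)"
      using strict_mono_less_eq[OF strict_mono_supp_deg] by simp
    then show "?g (Suc n + J) \<le> geo_weight (Suc n + J) / real (supp_deg f (Suc J))"
      using supp_deg_pos[of f "Suc J"] geo_weight_nonneg by (intro divide_left_mono) auto
  next
    show "summable (\<lambda>n. ?g (Suc n + J))"
      using tail summable_Suc_iff[of "\<lambda>n. ?g (n + J)"] by simp
  next
    show "summable (\<lambda>n. geo_weight (Suc n + J) / real (supp_deg f (Suc J)))"
      using geo_weight_tail_sums by (intro summable_divide sums_summable)
  qed
  also have "(\<Sum>n. geo_weight (Suc n + J) / real (supp_deg f (Suc J))) = geo_weight J / real (supp_deg f (Suc J))"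
    using sums_divide[OF geo_weight_tail_sums] by (rule sums_unique[symmetric])
  finally show ?thesis
    by simp
qed

lemma offspring_sums: "offspring f sums 1"
proof -
  define g where "g d = (if d \<in> range (supp_deg f) then geo_weight (inv (supp_deg f) d) / real d else 0)" for d
  have "(\<lambda>n. g (supp_deg f n)) sums positive_mass f"
    unfolding g_def positive_mass_def using summable_atom_mass
    by (simp add: inv_f_f[OF inj_supp_deg] summable_sums)
  then have "g sums positive_mass f"
    using sums_mono_reindex[OF strict_mono_supp_deg[of f], of g] by (simp add: g_def)
  then have "(\<lambda>d. (if d = 0 then 1 - positive_mass f else 0) + g d) sums (1 - positive_mass f + positive_mass f)"
    using sums_single[of 0 "\<lambda>_. 1 - positive_mass f"] by (intro sums_add) auto
  moreover have "(\<lambda>d. (if d = 0 then 1 - positive_mass f else 0) + g d) = offspring f"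
    using zero_notin_range_supp_deg[of f] by (auto simp: g_def offspring_def)
  ultimately show ?thesis
    by simp
qed

lemma offspring_mean_sums: "(\<lambda>d. real d * offspring f d) sums 1"
proof -
  define g where "g d = (if d \<in> range (supp_deg f) then geo_weight (inv (supp_deg f) d) else 0)" for d
  have "(\<lambda>n. g (supp_deg f n)) sums 1"
    using geo_weight_sums by (simp add: g_def inv_f_f[OF inj_supp_deg])
  then have "g sums 1"
    using sums_mono_reindex[OF strict_mono_supp_deg[of f], of g] by (simp add: g_def)
  moreover have "g = (\<lambda>d. real d * offspring f d)"
  proof
    fix d
    show "g d = real d * offspring f d"
    proof (cases "d \<in> range (supp_deg f)")
      case True
      then obtain i where "d = supp_deg f i"
        by auto
      then show ?thesis
        by (simp add: g_def inv_f_f[OF inj_supp_deg] supp_deg_times_offspring)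
    qed (cases "d = 0"; simp add: g_def offspring_eq_0)
  qed
  ultimately show ?thesis
    by simp
qed

lemma critical_offspring: "critical (offspring f)"
  unfolding critical_def offspring_distr_def
  using offspring_nonneg offspring_sums offspring_mean_sums by auto


lemma supp_exp_le_ln_supp_deg: "real (supp_exp f j) \<le> ln (real (supp_deg f j))"
proof -
  have "1 \<le> ln (3::real)"
    using exp_le by (subst ln_ge_iff) auto
  then show ?thesis
    by (simp add: supp_deg_def ln_realpow mult_le_cancel_left1)
qed

lemma power_half_times_power: "((1/2::real) ^ J) ^ k * (2 ^ k) ^ J = 1"
  by (simp add: power_mult[symmetric] mult.commute[of J] power_mult_distrib[symmetric] power_one_over)

lemma supp_deg_Suc_ge_real:
  "32 * real (Suc j) * (real (supp_deg f j) + 2) \<le> ((1/2) ^ Suc j) ^ 4 * real (supp_deg f (Suc j))"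
proof -
  have "real (32 * Suc j * 16 ^ Suc j * (supp_deg f j + 2)) \<le> real (supp_deg f (Suc j))"
    using supp_deg_Suc_ge[of j f] by (simp only: of_nat_le_iff)
  then have "32 * real (Suc j) * 16 ^ Suc j * (real (supp_deg f j) + 2) \<le> real (supp_deg f (Suc j))"
    by (simp only: of_nat_mult of_nat_add of_nat_power of_nat_numeral)
  then have le: "((1/2) ^ Suc j) ^ 4 * (32 * real (Suc j) * 16 ^ Suc j * (real (supp_deg f j) + 2))
      \<le> ((1/2) ^ Suc j) ^ 4 * real (supp_deg f (Suc j))"
    by (intro mult_left_mono) auto
  have "((1/2::real) ^ Suc j) ^ 4 * 16 ^ Suc j = 1"
    using power_half_times_power[of "Suc j" 4] by simp
  then have "((1/2) ^ Suc j) ^ 4 * (32 * real (Suc j) * 16 ^ Suc j * (real (supp_deg f j) + 2))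
      = 32 * real (Suc j) * (real (supp_deg f j) + 2)"
    by (simp only: mult_ac mult_1_right)
  with le show ?thesis
    by (simp only:)
qed

lemma window_le_supp_deg_Suc: "8 ^ J * supp_deg f J \<le> supp_deg f (Suc J)"
proof -
  have "(8::nat) ^ J \<le> 16 ^ J"
    by (rule power_mono) auto
  also have "\<dots> \<le> 16 ^ Suc J"
    by (rule power_increasing) auto
  also have "\<dots> \<le> 32 * Suc J * 16 ^ Suc J"
    by simp
  finally have "8 ^ J * supp_deg f J \<le> 32 * Suc J * 16 ^ Suc J * (supp_deg f J + 2)"
    by (intro mult_le_mono) auto
  then show ?thesis
    using supp_deg_Suc_ge[of J f] by (rule le_trans)
qed

lemma large_mean_power_le:
  "(1 - (1/2::real) ^ Suc J) ^ (8 * 2 ^ J * e) \<le> 1 / (real (3 ^ e))\<^sup>2"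
proof -
  let ?y = "(1/2::real) ^ Suc J"
  have y: "0 \<le> ?y" "?y \<le> 1"
    by (simp, rule power_le_one) auto
  have "(1 - ?y) ^ (2 ^ Suc J) \<le> 1 / (1 + real (2 ^ Suc J) * ?y)"
    using y by (rule one_minus_power_le_inverse)
  also have "real (2 ^ Suc J) * ?y = 1"
    by (simp add: power_mult_distrib[symmetric])
  finally have half: "(1 - ?y) ^ (2 ^ Suc J) \<le> 1/2"
    by simp
  have "(1 - ?y) ^ (8 * 2 ^ J * e) = ((1 - ?y) ^ (2 ^ Suc J)) ^ (4 * e)"
    by (simp add: power_mult[symmetric] mult_ac)
  also have "\<dots> \<le> (1/2) ^ (4 * e)"
    using half y by (intro power_mono) auto
  also have "(1/2::real) ^ (4 * e) = 1 / 16 ^ e"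
    by (simp add: power_mult power_divide)
  also have "1 / 16 ^ e \<le> 1 / (real (3 ^ e))\<^sup>2"
  proof -
    have "(real (3 ^ e))\<^sup>2 = (9::real) ^ e"
      by (simp add: power_mult[symmetric] mult.commute[of e 2] power_mult)
    moreover have "(9::real) ^ e \<le> 16 ^ e"
      by (intro power_mono) auto
    ultimately show ?thesis
      by (simp add: frac_le)
  qed
  finally show ?thesis .
qed


lemma truncated_offspring_supp_deg: "truncated_offspring (offspring f) (supp_deg f i)"
  by unfold_locales (auto simp: offspring_nonneg supp_deg_pos sum_offspring_below_supp_deg_le_1)

lemma mean_truncated_offspring_supp_deg:
  "truncated_offspring.mean (offspring f) (supp_deg f i) = 1 - (1/2) ^ i"
  by (simp add: truncated_offspring.mean_def[OF truncated_offspring_supp_deg]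
      mean_offspring_below_supp_deg)

lemma window_size_less:
  assumes "16 ^ Suc j \<le> f n" "n \<le> 8 ^ Suc j * supp_deg f (Suc j)"
  shows "real n < real (supp_deg f (Suc j)) * f n"
proof -
  have "real n \<le> real (8 ^ Suc j * supp_deg f (Suc j))"
    using assms(2) by (simp only: of_nat_le_iff)
  also have "\<dots> = 8 ^ Suc j * real (supp_deg f (Suc j))"
    by simp
  also have "\<dots> < 16 ^ Suc j * real (supp_deg f (Suc j))"
    using supp_deg_pos[of f "Suc j"] by (intro mult_strict_right_mono power_strict_mono) auto
  also have "\<dots> \<le> f n * real (supp_deg f (Suc j))"
    using assms(1) by (intro mult_right_mono) auto
  finally show ?thesis
    by (simp add: mult.commute)
qed

lemma window_height_le:
  assumes "16 ^ Suc j \<le> f n" "supp_deg f (Suc j) < n"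
  shows "real (8 * 2 ^ Suc j * supp_exp f (Suc j)) \<le> f n * ln (real n)"
proof -
  have "(8::real) * 2 ^ Suc j \<le> 8 ^ Suc j * 2 ^ Suc j"
    by (intro mult_right_mono) (auto simp: self_le_power)
  also have "\<dots> = 16 ^ Suc j"
    by (simp add: power_mult_distrib[symmetric])
  finally have "real (8 * 2 ^ Suc j * supp_exp f (Suc j)) \<le> 16 ^ Suc j * real (supp_exp f (Suc j))"
    by (simp add: mult_right_mono)
  also have "\<dots> \<le> f n * ln (real n)"
  proof (intro mult_mono)
    have "real (supp_exp f (Suc j)) \<le> ln (real (supp_deg f (Suc j)))"
      by (rule supp_exp_le_ln_supp_deg)
    also have "\<dots> \<le> ln (real n)"
      using assms(2) supp_deg_pos[of f "Suc j"] by simp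
    finally show "real (supp_exp f (Suc j)) \<le> ln (real n)" .
  qed (use assms(1) in \<open>auto intro: order_trans[OF _ assms(1)]\<close>)
  finally show ?thesis .
qed

lemma size_window_offspring:
  assumes lim: "filterlim f at_top sequentially"
  shows "size_window (offspring f) (supp_deg f (Suc j)) (supp_deg f (Suc (Suc j)))
    (8 ^ Suc j * supp_deg f (Suc j)) (8 * 2 ^ Suc j * supp_exp f (Suc j)) f"
proof (rule size_window.intro[OF truncated_offspring_supp_deg truncated_offspring_supp_deg],
    unfold size_window_axioms_def mean_truncated_offspring_supp_deg, intro conjI allI impI)
  have "(1::nat) < 8 ^ Suc j"
    by (rule one_less_power) auto
  from mult_strict_right_mono[OF this supp_deg_pos]
  show "supp_deg f (Suc j) < 8 ^ Suc j * supp_deg f (Suc j)"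
    by simp
  show "8 ^ Suc j * supp_deg f (Suc j) \<le> supp_deg f (Suc (Suc j))"
    by (rule window_le_supp_deg_Suc)
  fix n assume n: "supp_deg f (Suc j) < n" "n \<le> 8 ^ Suc j * supp_deg f (Suc j)"
  have f_n: "16 ^ Suc j \<le> f n"
    using threshold_le_supp_deg_Suc[of f j] n(1) by (intro le_of_threshold_le[OF lim]) simp
  then show "0 < f n"
    using zero_less_power[of "16::real" "Suc j"] by linarith
  show "real n < real (supp_deg f (Suc j)) * f n"
    using f_n n(2) by (rule window_size_less)
  show "real (8 * 2 ^ Suc j * supp_exp f (Suc j)) \<le> f n * ln (real n)"
    using f_n n(1) by (rule window_height_le)
qed (simp_all add: mean_truncated_offspring_supp_deg)


locale offspring_window =
  fixes f :: "nat \<Rightarrow> real" and j :: nat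
  assumes lim: "filterlim f at_top sequentially" and j_pos: "0 < j"
begin

sublocale size_window "offspring f" "supp_deg f (Suc j)" "supp_deg f (Suc (Suc j))"
    "8 ^ Suc j * supp_deg f (Suc j)" "8 * 2 ^ Suc j * supp_exp f (Suc j)" f
  using lim by (rule size_window_offspring)

definition mean_gap :: real where "mean_gap = (1/2) ^ Suc j"

lemma mean_gap_pos: "0 < mean_gap" and mean_gap_le: "mean_gap \<le> 1/4"
proof -
  show "0 < mean_gap"
    by (simp add: mean_gap_def)
  have "(1/2::real) ^ Suc j \<le> (1/2) ^ 2"
    using j_pos by (intro power_decreasing) auto
  then show "mean_gap \<le> 1/4"
    by (simp add: mean_gap_def power2_eq_square)
qed

lemma small_mean_eq: "small.mean = 1 - mean_gap"
  by (simp add: mean_truncated_offspring_supp_deg mean_gap_def)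

lemma offspring_supp_deg_eq: "offspring f (supp_deg f (Suc j)) = mean_gap / (2 * real (supp_deg f (Suc j)))"
  by (simp add: offspring_supp_deg geo_weight_def mean_gap_def)

lemma small_defect_le:
  "small.defect \<le> mean_gap / (2 * real (supp_deg f (Suc j))) + mean_gap / (2 * real (supp_deg f (Suc (Suc j))))"
  using defect_offspring_below_supp_deg[of f "Suc j"]
  by (simp add: small.defect_def geo_weight_def mean_gap_def)

lemma small_factorial_moment2_le: "small.factorial_moment2 \<le> real (supp_deg f j)"
  using factorial_moment2_offspring_below_supp_deg[of f j] by (simp add: small.factorial_moment2_def)

lemma large_mean_power_h_le: "large.mean ^ (8 * 2 ^ Suc j * supp_exp f (Suc j)) \<le> 1 / (real (supp_deg f (Suc j)))\<^sup>2"
proof -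
  have "large.mean = 1 - (1/2) ^ Suc (Suc j)"
    by (simp add: mean_truncated_offspring_supp_deg)
  then show ?thesis
    using large_mean_power_le[of "Suc j" "supp_exp f (Suc j)"] by (simp add: supp_deg_def)
qed

lemma supp_deg_growth: "32 * real (Suc j) * (real (supp_deg f j) + 2) \<le> mean_gap ^ 4 * real (supp_deg f (Suc j))"
  unfolding mean_gap_def by (rule supp_deg_Suc_ge_real)

lemma good_bound_ge: "mean_gap / (16 * real (supp_deg f (Suc j))) \<le> good_bound"
proof -
  let ?K = "real (supp_deg f (Suc j))" and ?B = "real (8 ^ Suc j * supp_deg f (Suc j))"
  have "1 * 2 \<le> real (Suc j) * (real (supp_deg f j) + 2)"
    by (intro mult_mono) auto
  then have "64 \<le> mean_gap ^ 4 * ?K"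
    using supp_deg_growth by linarith
  also have "\<dots> \<le> mean_gap * ?K"
    using power_decreasing[of 1 4 mean_gap] mean_gap_pos mean_gap_le by (intro mult_right_mono) auto
  finally have big: "16 \<le> mean_gap * ?K"
    by simp
  have "4 * supp_deg f (Suc j) \<le> 8 ^ Suc j * supp_deg f (Suc j)"
    using one_le_power[of "8::nat" j] by (intro mult_le_mono1) simp
  then have "4 * supp_deg f (Suc j) \<le> supp_deg f (Suc (Suc j))"
    using window_le_supp_deg_Suc[of "Suc j" f] by (rule le_trans)
  then have "real (4 * supp_deg f (Suc j)) \<le> real (supp_deg f (Suc (Suc j)))"
    by (simp only: of_nat_le_iff)
  then have kn: "4 * ?K \<le> real (supp_deg f (Suc (Suc j)))"
    by simp
  have Bx: "?B * mean_gap ^ 3 = ?K"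
  proof -
    have "(8::real) ^ Suc j * mean_gap ^ 3 = 1"
      unfolding mean_gap_def using power_half_times_power[of "Suc j" 3] by (simp add: mult.commute)
    then show ?thesis
      by (simp add: algebra_simps)
  qed
  have "mean_gap / (16 * ?K) \<le> mean_gap / (2 * ?K) * (1
      - ?K * (small.defect / mean_gap + (1 - mean_gap) ^ (8 ^ Suc j * supp_deg f (Suc j)))
      - ?K * (1 / mean_gap) / ?B) - large.mean ^ (8 * 2 ^ Suc j * supp_exp f (Suc j))"
    using mean_gap_pos mean_gap_le
    by (intro window_good_bound_ge[OF mean_gap_pos mean_gap_le big kn small.defect_nonneg
          small_defect_le Bx _ one_minus_power_le_inverse large_mean_power_h_le]) simp_all
  moreover have "1 - (1 - mean_gap) = mean_gap"
    by simp
  ultimately show ?thesis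
    unfolding good_bound_def small_mean_eq offspring_supp_deg_eq by (simp only:)
qed

lemma bad_bound_le:
  "bad_bound \<le> 2 * (real (supp_deg f j) + 2) / (mean_gap ^ 3 * (real (supp_deg f (Suc j)))\<^sup>2)"
proof -
  have "1 - (1 - mean_gap) = mean_gap"
    by simp
  moreover have "(1 + 2 * (1 - mean_gap) * (1 / mean_gap) + small.factorial_moment2 * (1 / mean_gap)\<^sup>2) / mean_gap
      / (real (supp_deg f (Suc j)) + 1)\<^sup>2 + large.mean ^ (8 * 2 ^ Suc j * supp_exp f (Suc j))
      \<le> 2 * (real (supp_deg f j) + 2) / (mean_gap ^ 3 * (real (supp_deg f (Suc j)))\<^sup>2)"
    using supp_deg_pos[of f "Suc j"]
    by (intro window_bad_bound_le[OF mean_gap_pos mean_gap_le _ small.factorial_moment2_nonneg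
          small_factorial_moment2_le large_mean_power_h_le]) simp
  ultimately show ?thesis
    unfolding bad_bound_def small_mean_eq by (simp only:)
qed

lemma bad_bound_le_good_bound: "0 < good_bound \<and> real (Suc j) * bad_bound \<le> good_bound"
proof
  let ?K = "real (supp_deg f (Suc j))" and ?K' = "real (supp_deg f j)"
  have "0 < mean_gap / (16 * ?K)"
    using mean_gap_pos supp_deg_pos[of f "Suc j"] by simp
  with good_bound_ge show "0 < good_bound"
    by linarith
  have "real (Suc j) * bad_bound \<le> real (Suc j) * (2 * (?K' + 2) / (mean_gap ^ 3 * ?K\<^sup>2))"
    using bad_bound_le by (intro mult_left_mono) auto
  also have "\<dots> = (32 * real (Suc j) * (?K' + 2)) / (16 * mean_gap ^ 3 * ?K\<^sup>2)"
    using mean_gap_pos supp_deg_pos[of f "Suc j"] by (simp add: field_simps)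
  also have "\<dots> \<le> (mean_gap ^ 4 * ?K) / (16 * mean_gap ^ 3 * ?K\<^sup>2)"
    using supp_deg_growth mean_gap_pos by (intro divide_right_mono) auto
  also have "\<dots> = mean_gap / (16 * ?K)"
    using mean_gap_pos supp_deg_pos[of f "Suc j"] by (simp add: field_simps power2_eq_square power3_eq_cube
        power4_eq_xxxx)
  also have "\<dots> \<le> good_bound"
    by (rule good_bound_ge)
  finally show "real (Suc j) * bad_bound \<le> good_bound" .
qed

lemma exists_size_large_proportion:
  "\<exists>n. Suc j \<le> n \<and> 0 < size_prob (offspring f) n
    \<and> real (Suc j) / (real (Suc j) + 1) \<le> cond_prob (offspring f) n (\<lambda>t. real (theight t) < f n * ln (real n))
    \<and> real (Suc j) / (real (Suc j) + 1) \<le> cond_prob (offspring f) n (\<lambda>t. real (twidth t) > real n / f n)"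
proof -
  have pos: "0 < good_bound" and le: "real (Suc j) * bad_bound \<le> good_bound"
    using bad_bound_le_good_bound by auto
  have "0 \<le> (\<Sum>n\<in>{supp_deg f (Suc j)<..8 ^ Suc j * supp_deg f (Suc j)}. bad_weight n)"
    by (intro sum_nonneg bad_weight_nonneg)
  with bad_weight_sum_le have "0 \<le> bad_bound"
    by linarith
  then have ratio: "real (Suc j) / (real (Suc j) + 1) \<le> good_bound / (good_bound + bad_bound)"
    using pos le by (intro ratio_le_proportion) auto
  obtain n where n: "supp_deg f (Suc j) < n" "0 < size_prob (offspring f) n"
    and height: "good_bound / (good_bound + bad_bound)
      \<le> cond_prob (offspring f) n (\<lambda>t. real (theight t) < f n * ln (real n))"
    and width: "good_bound / (good_bound + bad_bound)
      \<le> cond_prob (offspring f) n (\<lambda>t. real (twidth t) > real n / f n)"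
    using exists_size_good_proportion[OF pos] by blast
  have "Suc j \<le> supp_deg f (Suc j)"
    using seq_suble[OF strict_mono_supp_deg] .
  with n show ?thesis
    using order.trans[OF ratio height] order.trans[OF ratio width] by (intro exI[of _ n]) simp
qed

end

lemma Limsup_eq_1_if_frequently_near_1:
  fixes g :: "nat \<Rightarrow> real"
  assumes le1: "\<And>n. g n \<le> 1"
    and big: "\<And>j. 0 < j \<Longrightarrow>
      \<exists>n. Suc j \<le> n \<and> n \<in> S \<and> real (Suc j) / (real (Suc j) + 1) \<le> g n"
  shows "Limsup (inf sequentially (principal S)) (\<lambda>n. ereal (g n)) = 1"
proof (rule antisym)
  show "Limsup (inf sequentially (principal S)) (\<lambda>n. ereal (g n)) \<le> 1"
    by (intro Limsup_bounded always_eventually) (simp add: le1)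
  show "1 \<le> Limsup (inf sequentially (principal S)) (\<lambda>n. ereal (g n))"
    unfolding Limsup_def
  proof (rule INF_greatest)
    fix P assume "P \<in> {P. eventually P (inf sequentially (principal S))}"
    then obtain N where N: "\<And>n. N \<le> n \<Longrightarrow> n \<in> S \<Longrightarrow> P n"
      by (auto simp: eventually_inf_principal eventually_sequentially)
    show "1 \<le> (SUP n\<in>{n. P n}. ereal (g n))"
    proof (rule dense_le)
      fix y :: ereal assume y: "y < 1"
      show "y \<le> (SUP n\<in>{n. P n}. ereal (g n))"
      proof (cases y)
        case (real r)
        obtain m :: nat where m: "1 / (1 - r) < real m"
          using reals_Archimedean2 by blast
        define j where "j = max 1 (max m N)"
        have "0 < j"
          by (simp add: j_def)
        then obtain n where n: "Suc j \<le> n" "n \<in> S" "real (Suc j) / (real (Suc j) + 1) \<le> g n"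
          using big by blast
        have "real m \<le> real (Suc j)"
          by (simp add: j_def)
        then have "1 / (1 - r) < real (Suc j)"
          using m by linarith
        moreover have "r < 1"
          using real y by simp
        ultimately have "1 < real (Suc j) * (1 - r)"
          by (simp add: divide_less_eq)
        with \<open>r < 1\<close> have "r < real (Suc j) / (real (Suc j) + 1)"
          by (simp add: pos_less_divide_eq algebra_simps)
        then have "y \<le> ereal (g n)"
          using n(3) real by simp
        also have "\<dots> \<le> (SUP n\<in>{n. P n}. ereal (g n))"
          using N n by (intro SUP_upper) (auto simp: j_def)
        finally show ?thesis .
      qed (use y in auto)
    qed
  qed
qed

theorem theorem2:
  fixes f :: "nat \<Rightarrow> real"
  assumes "\<forall>n\<ge>1. f n > 0"
    and "filterlim f at_top sequentially"
  shows "\<exists>\<mu>. critical \<mu> \<and>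
    Limsup (admissible_seq \<mu>)
      (\<lambda>n. ereal (cond_prob \<mu> n (\<lambda>t. real (theight t) < f n * ln (real n)))) = 1 \<and>
    Limsup (admissible_seq \<mu>)
      (\<lambda>n. ereal (cond_prob \<mu> n (\<lambda>t. real (twidth t) > real n / f n))) = 1"
proof (intro exI conjI)
  let ?\<mu> = "offspring f"
  have windows: "\<exists>n. Suc j \<le> n \<and> n \<in> {n. 0 < size_prob ?\<mu> n}
      \<and> real (Suc j) / (real (Suc j) + 1) \<le> cond_prob ?\<mu> n (\<lambda>t. real (theight t) < f n * ln (real n))
      \<and> real (Suc j) / (real (Suc j) + 1) \<le> cond_prob ?\<mu> n (\<lambda>t. real (twidth t) > real n / f n)"
    if "0 < j" for j
  proof -
    interpret offspring_window f j
      using assms(2) that by unfold_locales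
    show ?thesis
      using exists_size_large_proportion by simp
  qed
  show "critical ?\<mu>"
    by (rule critical_offspring)
  show "Limsup (admissible_seq ?\<mu>) (\<lambda>n. ereal (cond_prob ?\<mu> n (\<lambda>t. real (theight t) < f n * ln (real n)))) = 1"
    "Limsup (admissible_seq ?\<mu>) (\<lambda>n. ereal (cond_prob ?\<mu> n (\<lambda>t. real (twidth t) > real n / f n))) = 1"
    unfolding admissible_seq_def using windows
    by (intro Limsup_eq_1_if_frequently_near_1 cond_prob_le_1 offspring_nonneg; blast)+
qed

end
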